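(* Let $f\in\mathcal O$ have $t$-expansion $f=\sum_{n\ge0}a_nt^n$. Then for every integer $i\ge1$, $D_if=\sum_{n\ge2}b_{i,n}t^n$ with $$b_{i,n}=\sum_{r=1}^{n-1}(-1)^{i+r}\binom{n-1}{r}\Big(\sum_{\substack{i_1,\dots,i_r\ge0\\ q^{i_1}+\cdots+q^{i_r}=i}}\frac1{d_{i_1}\cdots d_{i_r}}\Big)a_{n-r}.$$
   Context: Let $q$ be a power of a prime $p$, $A=\mathbb F_q[T]$, $K_\infty=\mathbb F_q((1/T))$, $C$ the completion of an algebraic closure of $K_\infty$, $\Omega=C\setminus K_\infty$. Let $[i]=T^{q^i}-T$, $d_0=1$, $d_i=[i][i-1]^q\cdots[1]^{q^{i-1}}$; the Carlitz exponential is $e_{\mathcal C}(z)=\sum_{n\ge0}z^{q^n}/d_n$, with kernel $\bar\pi A$ where $\bar\pi$ is a fixed fundamental period; $t(z)=1/e_{\mathcal C}(\bar\pi z)$. $\mathcal O$ is the ring of $A$-periodic rigid-analytic $f:\Omega\to C$ which for $|z|_i$ large ($|z|_i=\inf_{x\in K_\infty}|z-x|$) equal a convergent series $\sum_{n\ge0}a_nt(z)^n$ (the $t$-expansion). For holomorphic $f$, $\mathcal D_nf$ is defined by $f(z+\varepsilon)=\sum_n(\mathcal D_nf)(z)\varepsilon^n$ for small $\varepsilon$, and $D_n=(-\bar\pi)^{-n}\mathcal D_n$. *)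

theory Defs
  imports "HOL-Computational_Algebra.Polynomial"
begin

text \<open>The field C is an abstract field 'c with an absolute value av :: 'c => real.
  All analytic notions (convergence, limits) are defined relative to av.\<close>

definition nonarch_abs :: "('c::field \<Rightarrow> real) \<Rightarrow> bool" where
  "nonarch_abs av \<longleftrightarrow> (\<forall>x. av x \<ge> 0) \<and> (\<forall>x. av x = 0 \<longleftrightarrow> x = 0)
     \<and> (\<forall>x y. av (x * y) = av x * av y) \<and> (\<forall>x y. av (x + y) \<le> max (av x) (av y))"

definition conv_av :: "('c::field \<Rightarrow> real) \<Rightarrow> (nat \<Rightarrow> 'c) \<Rightarrow> 'c \<Rightarrow> bool" where
  "conv_av av s L \<longleftrightarrow> (\<forall>e>0. \<exists>N. \<forall>n\<ge>N. av (s n - L) < e)"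

definition complete_av :: "('c::field \<Rightarrow> real) \<Rightarrow> bool" where
  "complete_av av \<longleftrightarrow> (\<forall>s. (\<forall>e>0. \<exists>N. \<forall>m\<ge>N. \<forall>n\<ge>N. av (s m - s n) < e)
      \<longrightarrow> (\<exists>L. conv_av av s L))"

definition lim_av :: "('c::field \<Rightarrow> real) \<Rightarrow> (nat \<Rightarrow> 'c) \<Rightarrow> 'c" where
  "lim_av av s = (THE L. conv_av av s L)"

definition sums_av :: "('c::field \<Rightarrow> real) \<Rightarrow> (nat \<Rightarrow> 'c) \<Rightarrow> 'c \<Rightarrow> bool" where
  "sums_av av c L \<longleftrightarrow> conv_av av (\<lambda>N. \<Sum>k<N. c k) L"

definition alg_closed_fld :: "'c::field itself \<Rightarrow> bool" where
  "alg_closed_fld _ \<longleftrightarrow> (\<forall>P::'c poly. degree P > 0 \<longrightarrow> (\<exists>x. poly P x = 0))"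

text \<open>F_q inside C (valid when char C = p and q is a power of p).\<close>
definition Fq :: "nat \<Rightarrow> 'c::field set" where
  "Fq q = {x. x ^ q = x}"

definition Aring :: "nat \<Rightarrow> 'c::field \<Rightarrow> 'c set" where
  "Aring q T = {\<Sum>k<n. c k * T ^ k | n c. \<forall>k. c k \<in> Fq q}"

definition Kinf :: "('c::field \<Rightarrow> real) \<Rightarrow> nat \<Rightarrow> 'c \<Rightarrow> 'c set" where
  "Kinf av q T = {x. \<exists>N c. (\<forall>k. c k \<in> Fq q) \<and> sums_av av (\<lambda>k. c k * T ^ N / T ^ k) x}"

definition algebraic_over :: "'c::field set \<Rightarrow> 'c \<Rightarrow> bool" where
  "algebraic_over K y \<longleftrightarrow> (\<exists>P::'c poly. P \<noteq> 0 \<and> (\<forall>k. coeff P k \<in> K) \<and> poly P y = 0)"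

text \<open>Standing assumptions: C is the completion of an algebraic closure of K_infinity.\<close>
definition setting :: "nat \<Rightarrow> nat \<Rightarrow> ('c::field \<Rightarrow> real) \<Rightarrow> 'c \<Rightarrow> bool" where
  "setting p q av T \<longleftrightarrow> prime p \<and> (\<exists>m\<ge>1. q = p ^ m) \<and> of_nat p = (0::'c)
     \<and> nonarch_abs av \<and> complete_av av \<and> alg_closed_fld TYPE('c) \<and> av T > 1
     \<and> (\<forall>z. \<forall>e>0. \<exists>y. algebraic_over (Kinf av q T) y \<and> av (z - y) < e)"

definition brk :: "nat \<Rightarrow> 'c::field \<Rightarrow> nat \<Rightarrow> 'c" where
  "brk q T i = T ^ (q ^ i) - T"

fun dd :: "nat \<Rightarrow> 'c::field \<Rightarrow> nat \<Rightarrow> 'c" where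
  "dd q T 0 = 1"
| "dd q T (Suc i) = brk q T (Suc i) * (dd q T i) ^ q"

definition eC :: "('c::field \<Rightarrow> real) \<Rightarrow> nat \<Rightarrow> 'c \<Rightarrow> 'c \<Rightarrow> 'c" where
  "eC av q T z = lim_av av (\<lambda>N. \<Sum>n<N. z ^ (q ^ n) / dd q T n)"

definition tfun :: "('c::field \<Rightarrow> real) \<Rightarrow> nat \<Rightarrow> 'c \<Rightarrow> 'c \<Rightarrow> 'c \<Rightarrow> 'c" where
  "tfun av q T pibar z = 1 / eC av q T (pibar * z)"

definition absi :: "('c::field \<Rightarrow> real) \<Rightarrow> nat \<Rightarrow> 'c \<Rightarrow> 'c \<Rightarrow> real" where
  "absi av q T z = Inf {av (z - x) | x. x \<in> Kinf av q T}"

definition Omega :: "('c::field \<Rightarrow> real) \<Rightarrow> nat \<Rightarrow> 'c \<Rightarrow> 'c set" where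
  "Omega av q T = UNIV - Kinf av q T"

definition local_exp :: "('c::field \<Rightarrow> real) \<Rightarrow> ('c \<Rightarrow> 'c) \<Rightarrow> 'c \<Rightarrow> (nat \<Rightarrow> 'c) \<Rightarrow> bool" where
  "local_exp av f z c \<longleftrightarrow> (\<exists>r>0. \<forall>e. av e < r \<longrightarrow> sums_av av (\<lambda>n. c n * e ^ n) (f (z + e)))"

text \<open>Membership in the ring O (with the analyticity condition rendered as local
  power-series expandability at every point of Omega).\<close>
definition in_O :: "('c::field \<Rightarrow> real) \<Rightarrow> nat \<Rightarrow> 'c \<Rightarrow> 'c \<Rightarrow> ('c \<Rightarrow> 'c) \<Rightarrow> (nat \<Rightarrow> 'c) \<Rightarrow> bool" where
  "in_O av q T pibar f a \<longleftrightarrow>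
     (\<forall>z\<in>Omega av q T. \<forall>b\<in>Aring q T. f (z + b) = f z)
   \<and> (\<forall>z\<in>Omega av q T. \<exists>c. local_exp av f z c)
   \<and> (\<exists>R. \<forall>z. absi av q T z \<ge> R \<longrightarrow>
          sums_av av (\<lambda>n. a n * tfun av q T pibar z ^ n) (f z))"

text \<open>Hasse derivatives \<D>_n f and D_n = (-pibar)^(-n) \<D>_n.\<close>
definition Dcal :: "('c::field \<Rightarrow> real) \<Rightarrow> ('c \<Rightarrow> 'c) \<Rightarrow> nat \<Rightarrow> 'c \<Rightarrow> 'c" where
  "Dcal av f n z = (THE c. local_exp av f z c) n"

definition Dop :: "('c::field \<Rightarrow> real) \<Rightarrow> 'c \<Rightarrow> ('c \<Rightarrow> 'c) \<Rightarrow> nat \<Rightarrow> 'c \<Rightarrow> 'c" where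
  "Dop av pibar f n z = Dcal av f n z / (- pibar) ^ n"

definition bcoef :: "nat \<Rightarrow> 'c::field \<Rightarrow> (nat \<Rightarrow> 'c) \<Rightarrow> nat \<Rightarrow> nat \<Rightarrow> 'c" where
  "bcoef q T a i n = (\<Sum>r=1..n-1. (-1) ^ (i + r) * of_nat ((n - 1) choose r)
      * (\<Sum>xs\<in>{xs. length xs = r \<and> sum_list (map (\<lambda>j. q ^ j) xs) = i}.
           1 / prod_list (map (dd q T) xs)) * a (n - r))"

end

theory Submission
  imports Defs "HOL-Computational_Algebra.Primes"
begin

text \<open>For \<open>|z|\<^sub>i\<close> large, \<open>u = e\<^sub>C(pibar z)\<close> is nonzero and \<open>t = t(z) = 1 / u\<close>.
  The Frobenius map is additive, hence so is \<open>e\<^sub>C\<close>, and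
  \<open>t(z + \<epsilon>) = t / (1 - G)\<close> with \<open>G = -t e\<^sub>C(pibar \<epsilon>) = \<Sum>\<^sub>j -t (pibar \<epsilon>)^(q^j) / d\<^sub>j\<close>.
  Expanding \<open>(1 - G)^(-n)\<close> binomially and each power \<open>G^r\<close> as a sum over index lists
  \<open>[i\<^sub>1, \<dots>, i\<^sub>r]\<close> writes \<open>f(z + \<epsilon>) = \<Sum>\<^sub>n a\<^sub>n t(z + \<epsilon>)^n\<close> as a sum, over the pairs
  \<open>(n, [i\<^sub>1, \<dots>, i\<^sub>r])\<close>, of \<open>\<epsilon>^(q^i\<^sub>1 + \<dots> + q^i\<^sub>r)\<close> times terms independent of \<open>\<epsilon>\<close>.
  For small \<open>\<epsilon>\<close> this family tends to zero, and in a complete nonarchimedean field such a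
  family can be summed in any grouping. Grouping by the weight \<open>q^i\<^sub>1 + \<dots> + q^i\<^sub>r\<close>
  yields the power series of \<open>f\<close> at \<open>z\<close>, so by uniqueness of local expansions the part of
  weight \<open>i\<close> sums to \<open>(-pibar)^i D\<^sub>i f(z)\<close>; grouping that part further by \<open>m = n + r\<close>,
  a finite sum for each \<open>m\<close>, gives \<open>(-pibar)^i b\<^sub>i\<^sub>,\<^sub>m t^m\<close>.\<close>

section \<open>Unconditional summation in a complete nonarchimedean field\<close>

definition null_family :: "('c::field \<Rightarrow> real) \<Rightarrow> ('i \<Rightarrow> 'c) \<Rightarrow> 'i set \<Rightarrow> bool" where
  "null_family av g I \<longleftrightarrow> (\<forall>e>0. finite {i\<in>I. e \<le> av (g i)})"

definition has_sum_av :: "('c::field \<Rightarrow> real) \<Rightarrow> ('i \<Rightarrow> 'c) \<Rightarrow> 'i set \<Rightarrow> 'c \<Rightarrow> bool" where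
  "has_sum_av av g I L \<longleftrightarrow> (\<forall>e>0. \<exists>F. finite F \<and> F \<subseteq> I \<and>
      (\<forall>G. finite G \<and> F \<subseteq> G \<and> G \<subseteq> I \<longrightarrow> av (sum g G - L) < e))"

definition infsum_av :: "('c::field \<Rightarrow> real) \<Rightarrow> ('i \<Rightarrow> 'c) \<Rightarrow> 'i set \<Rightarrow> 'c" where
  "infsum_av av g I = (THE L. has_sum_av av g I L)"

lemma power_eventually_less:
  assumes "0 \<le> (x::real)" "x < 1" "e > 0" obtains N where "\<And>n. n \<ge> N \<Longrightarrow> x ^ n < e"
proof -
  obtain N where N: "x ^ N < e" using real_arch_pow_inv[OF assms(3,2)] by blast
  have "x ^ n < e" if "n \<ge> N" for n
    using power_decreasing[OF that assms(1)] assms(2) N by force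
  thus ?thesis using that by blast
qed

lemma lists_length_Suc_eq_image:
  "{xs. length xs = Suc r} = (\<lambda>(x, xs). x # xs) ` (UNIV \<times> {xs. length xs = r})"
  by (auto simp: length_Suc_conv image_iff)

locale nonarch_field =
  fixes av :: "'c::field \<Rightarrow> real"
  assumes nonarch: "nonarch_abs av" and complete: "complete_av av"
begin

lemma av_nonneg [simp]: "av x \<ge> 0"
  using nonarch unfolding nonarch_abs_def by blast

lemma av_eq_0_iff [simp]: "av x = 0 \<longleftrightarrow> x = 0"
  using nonarch unfolding nonarch_abs_def by blast

lemma av_0 [simp]: "av 0 = 0"
  by simp

lemma av_mult [simp]: "av (x * y) = av x * av y"
  using nonarch unfolding nonarch_abs_def by blast

lemma av_add_le_max: "av (x + y) \<le> max (av x) (av y)"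
  using nonarch unfolding nonarch_abs_def by blast

lemma av_pos: "x \<noteq> 0 \<Longrightarrow> av x > 0"
  using av_nonneg[of x] av_eq_0_iff[of x] by linarith

lemma av_1 [simp]: "av 1 = 1"
proof -
  have "av 1 = av 1 * av 1" using av_mult[of 1 1] by simp
  thus ?thesis using av_eq_0_iff[of 1] by (metis mult_cancel_left1 one_neq_zero)
qed

lemma av_minus [simp]: "av (- x) = av x"
proof -
  have "av (-1) * av (-1) = 1" using av_mult[of "-1" "-1"] by simp
  hence "av (-1) = 1" using av_nonneg[of "-1"] by (smt (verit) power2_eq_1_iff power2_eq_square)
  thus ?thesis using av_mult[of "-1" x] by simp
qed

lemma av_minus_commute: "av (x - y) = av (y - x)"
  by (metis av_minus minus_diff_eq)

lemma av_power [simp]: "av (x ^ n) = av x ^ n"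
  by (induct n) auto

lemma av_inverse [simp]: "av (inverse x) = inverse (av x)"
proof (cases "x = 0")
  case False
  hence "av (inverse x) * av x = 1" by (metis av_1 av_mult left_inverse)
  thus ?thesis by (metis inverse_unique mult.commute)
qed simp

lemma av_divide [simp]: "av (x / y) = av x / av y"
  by (simp add: divide_inverse)

lemma av_diff_le_max: "av (x - y) \<le> max (av x) (av y)"
  using av_add_le_max[of x "-y"] by simp

lemma av_add_less: "av x < e \<Longrightarrow> av y < e \<Longrightarrow> av (x + y) < e"
  using av_add_le_max[of x y] by linarith

lemma av_diff_less: "av x < e \<Longrightarrow> av y < e \<Longrightarrow> av (x - y) < e"
  using av_diff_le_max[of x y] by linarith

lemma av_add_eq_left:
  assumes "av y < av x" shows "av (x + y) = av x"
proof -
  have "av (x + y) \<le> av x" using av_add_le_max[of x y] assms by linarith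
  moreover have "av x \<le> max (av (x + y)) (av (-y))" using av_add_le_max[of "x + y" "-y"] by simp
  ultimately show ?thesis using assms by auto
qed

lemma av_one_minus: "av y < 1 \<Longrightarrow> av (1 - y) = 1"
  using av_add_eq_left[of "-y" 1] by simp

lemma av_of_nat_le_1: "av (of_nat n) \<le> 1"
proof (induct n)
  case (Suc n) thus ?case using av_add_le_max[of 1 "of_nat n"] by simp
qed simp

lemma av_sum_less: "e > 0 \<Longrightarrow> (\<And>i. i \<in> F \<Longrightarrow> av (g i) < e) \<Longrightarrow> av (sum g F) < e"
  by (induct F rule: infinite_finite_induct) (auto simp: av_add_less)

lemma av_sum_le: "B \<ge> 0 \<Longrightarrow> (\<And>i. i \<in> F \<Longrightarrow> av (g i) \<le> B) \<Longrightarrow> av (sum g F) \<le> B"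
proof (induct F rule: infinite_finite_induct)
  case (insert x F) thus ?case using av_add_le_max[of "g x" "sum g F"] by fastforce
qed auto

lemma conv_av_unique: "conv_av av s L \<Longrightarrow> conv_av av s L' \<Longrightarrow> L = L'"
proof (rule ccontr)
  assume s: "conv_av av s L" "conv_av av s L'" and "L \<noteq> L'"
  hence e: "av (L - L') > 0" by (simp add: av_pos)
  obtain N1 where N1: "\<forall>n\<ge>N1. av (s n - L) < av (L - L')" using s(1) e unfolding conv_av_def by blast
  obtain N2 where N2: "\<forall>n\<ge>N2. av (s n - L') < av (L - L')" using s(2) e unfolding conv_av_def by blast
  define n where "n = max N1 N2"
  have a: "av (s n - L) < av (L - L')" and b: "av (s n - L') < av (L - L')"
    using N1 N2 by (simp_all add: n_def)
  have "av ((s n - L') - (s n - L)) < av (L - L')" by (rule av_diff_less[OF b a])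
  thus False by simp
qed

lemma lim_av_eqI: "conv_av av s L \<Longrightarrow> lim_av av s = L"
  unfolding lim_av_def using conv_av_unique by blast

lemma null_familyD: "null_family av g I \<Longrightarrow> e > 0 \<Longrightarrow> finite {i \<in> I. e \<le> av (g i)}"
  by (simp add: null_family_def)

lemma has_sum_avE:
  assumes "has_sum_av av g I L" "e > 0"
  obtains F where "finite F" "F \<subseteq> I"
    "\<And>G. finite G \<Longrightarrow> F \<subseteq> G \<Longrightarrow> G \<subseteq> I \<Longrightarrow> av (sum g G - L) < e"
proof -
  obtain F where "finite F \<and> F \<subseteq> I \<and> (\<forall>G. finite G \<and> F \<subseteq> G \<and> G \<subseteq> I \<longrightarrow> av (sum g G - L) < e)"
    using assms(1)[unfolded has_sum_av_def, rule_format, OF assms(2)] ..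
  thus ?thesis using that by auto
qed

lemma has_sum_av_unique: "has_sum_av av g I L \<Longrightarrow> has_sum_av av g I L' \<Longrightarrow> L = L'"
proof (rule ccontr)
  assume h: "has_sum_av av g I L" "has_sum_av av g I L'" and "L \<noteq> L'"
  hence e: "av (L - L') > 0" by (simp add: av_pos)
  obtain F1 where F1: "finite F1" "F1 \<subseteq> I"
    "\<And>G. finite G \<Longrightarrow> F1 \<subseteq> G \<Longrightarrow> G \<subseteq> I \<Longrightarrow> av (sum g G - L) < av (L - L')"
    using has_sum_avE[OF h(1) e] by blast
  obtain F2 where F2: "finite F2" "F2 \<subseteq> I"
    "\<And>G. finite G \<Longrightarrow> F2 \<subseteq> G \<Longrightarrow> G \<subseteq> I \<Longrightarrow> av (sum g G - L') < av (L - L')"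
    using has_sum_avE[OF h(2) e] by blast
  have a: "av (sum g (F1 \<union> F2) - L) < av (L - L')" and b: "av (sum g (F1 \<union> F2) - L') < av (L - L')"
    using F1 F2 by auto
  have "av ((sum g (F1 \<union> F2) - L') - (sum g (F1 \<union> F2) - L)) < av (L - L')"
    by (rule av_diff_less[OF b a])
  thus False by simp
qed

lemma infsum_av_eqI: "has_sum_av av g I L \<Longrightarrow> infsum_av av g I = L"
  unfolding infsum_av_def using has_sum_av_unique by blast

lemma av_sum_diff_less:
  assumes "finite G" "F \<subseteq> G" "e > 0" "\<And>i. i \<in> G - F \<Longrightarrow> av (g i) < e"
  shows "av (sum g G - sum g F) < e"
  using av_sum_less[of e "G - F" g] sum_diff[OF assms(1,2), of g] assms(3,4) by simp

text \<open>Completeness enters here: the partial sums over the finite sets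
  \<open>{i. inverse (Suc k) \<le> av (g i)}\<close> form a Cauchy sequence.\<close>
lemma null_family_has_sum_av_ex:
  assumes "null_family av g I" shows "\<exists>L. has_sum_av av g I L"
proof -
  define F where "F k = {i\<in>I. inverse (real (Suc k)) \<le> av (g i)}" for k
  define s where "s k = sum g (F k)" for k
  have finF: "finite (F k)" for k using assms unfolding null_family_def F_def by auto
  have monoF: "F k \<subseteq> F m" if "k \<le> m" for k m
  proof -
    have le: "inverse (real (Suc m)) \<le> inverse (real (Suc k))" using that by (intro le_imp_inverse_le) auto
    show ?thesis unfolding F_def using order_trans[OF le] by blast
  qed
  have close: "av (sum g G - s k) < e"
    if "finite G" "F k \<subseteq> G" "G \<subseteq> I" "inverse (real (Suc k)) < e" for G k e
  proof (rule av_sum_diff_less[of G "F k" e g, folded s_def])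
    show "e > 0" using that(4) by (smt (verit) inverse_positive_iff_positive of_nat_0_less_iff zero_less_Suc)
  qed (use that in \<open>auto simp: F_def\<close>)
  have "\<exists>N. \<forall>m\<ge>N. \<forall>n\<ge>N. av (s m - s n) < e" if e: "e > 0" for e
  proof -
    obtain N where N: "inverse (real (Suc N)) < e" using reals_Archimedean[OF e] by blast
    have close_N: "av (s m - s N) < e" if "m \<ge> N" for m
      using close[of "F m" N] finF monoF[OF that] N by (auto simp: s_def F_def)
    have "av (s m - s n) < e" if "m \<ge> N" "n \<ge> N" for m n
      using av_diff_less[OF close_N[OF that(1)] close_N[OF that(2)]] by simp
    thus ?thesis by blast
  qed
  then obtain L where L: "conv_av av s L" using complete unfolding complete_av_def by blast
  have "has_sum_av av g I L"
    unfolding has_sum_av_def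
  proof (intro allI impI)
    fix e :: real assume e: "e > 0"
    obtain N1 where N1: "inverse (real (Suc N1)) < e" using reals_Archimedean[OF e] by blast
    obtain N2 where N2: "\<forall>n\<ge>N2. av (s n - L) < e" using L e unfolding conv_av_def by blast
    define N where "N = max N1 N2"
    have "inverse (real (Suc N)) \<le> inverse (real (Suc N1))"
      by (intro le_imp_inverse_le) (auto simp: N_def)
    hence N: "inverse (real (Suc N)) < e" "av (s N - L) < e"
      using N1 N2 by (linarith, simp add: N_def)
    have "av ((sum g G - s N) + (s N - L)) < e" if "finite G" "F N \<subseteq> G" "G \<subseteq> I" for G
      using close[OF that N(1)] N(2) by (intro av_add_less) auto
    thus "\<exists>F'. finite F' \<and> F' \<subseteq> I \<and> (\<forall>G. finite G \<and> F' \<subseteq> G \<and> G \<subseteq> I \<longrightarrow> av (sum g G - L) < e)"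
      using finF[of N] by (intro exI[of _ "F N"]) (auto simp: F_def)
  qed
  thus ?thesis by blast
qed

lemma null_family_has_sum_av: "null_family av g I \<Longrightarrow> has_sum_av av g I (infsum_av av g I)"
  using null_family_has_sum_av_ex infsum_av_eqI by blast

lemma null_family_natI:
  fixes c :: "nat \<Rightarrow> 'c"
  assumes "\<And>e. e > 0 \<Longrightarrow> \<exists>N. \<forall>n\<ge>N. av (c n) < e" shows "null_family av c UNIV"
  unfolding null_family_def
proof (intro allI impI)
  fix e :: real assume "e > 0"
  from assms[OF this] obtain N where N: "\<forall>n\<ge>N. av (c n) < e" ..
  have "{n \<in> UNIV. e \<le> av (c n)} \<subseteq> {..<N}"
  proof
    fix n assume "n \<in> {n \<in> UNIV. e \<le> av (c n)}"
    hence ge: "e \<le> av (c n)" by simp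
    show "n \<in> {..<N}"
    proof (rule ccontr)
      assume "n \<notin> {..<N}"
      hence "N \<le> n" by (simp add: not_less)
      hence "av (c n) < e" using N by simp
      thus False using ge by simp
    qed
  qed
  thus "finite {n \<in> UNIV. e \<le> av (c n)}" using finite_subset by blast
qed

lemma has_sum_av_imp_sums_av: "has_sum_av av c UNIV L \<Longrightarrow> sums_av av c L"
  unfolding sums_av_def conv_av_def
proof (intro allI impI)
  fix e :: real assume h: "has_sum_av av c UNIV L" and e: "e > 0"
  obtain F where F: "finite F" "F \<subseteq> UNIV"
    "\<And>G. finite G \<Longrightarrow> F \<subseteq> G \<Longrightarrow> G \<subseteq> UNIV \<Longrightarrow> av (sum c G - L) < e"
    using has_sum_avE[OF h e] by blast
  obtain N where N: "F \<subseteq> {..<N}" using F(1) finite_nat_iff_bounded by auto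
  have "av ((\<Sum>k<n. c k) - L) < e" if "n \<ge> N" for n
  proof -
    have "F \<subseteq> {..<n}" using N that by auto
    thus ?thesis using F(3)[of "{..<n}"] by simp
  qed
  thus "\<exists>N. \<forall>n\<ge>N. av ((\<Sum>k<n. c k) - L) < e" by blast
qed

lemma sums_av_imp_null_family:
  assumes "sums_av av c L" shows "null_family av c UNIV"
proof (rule null_family_natI)
  fix e :: real assume e: "e > 0"
  obtain N where N: "\<forall>n\<ge>N. av ((\<Sum>k<n. c k) - L) < e"
    using assms e unfolding sums_av_def conv_av_def by blast
  have "av (c n) < e" if "n \<ge> N" for n
  proof -
    have a: "av ((\<Sum>k<Suc n. c k) - L) < e" and b: "av ((\<Sum>k<n. c k) - L) < e"
      using N[rule_format, of "Suc n"] N[rule_format, of n] that by auto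
    have "(\<Sum>k<Suc n. c k) - L - ((\<Sum>k<n. c k) - L) = c n" by simp
    thus ?thesis using av_diff_less[OF a b] by metis
  qed
  thus "\<exists>N. \<forall>n\<ge>N. av (c n) < e" by blast
qed

lemma sums_av_imp_has_sum_av:
  assumes "sums_av av c L" shows "has_sum_av av c UNIV L"
proof -
  have h: "has_sum_av av c UNIV (infsum_av av c UNIV)"
    using null_family_has_sum_av[OF sums_av_imp_null_family[OF assms]] .
  have "infsum_av av c UNIV = L"
    using has_sum_av_imp_sums_av[OF h] assms unfolding sums_av_def by (rule conv_av_unique)
  thus ?thesis using h by simp
qed

lemma has_sum_av_cmult_right:
  assumes "has_sum_av av g I L" shows "has_sum_av av (\<lambda>i. c * g i) I (c * L)"
proof (cases "c = 0")
  case True thus ?thesis unfolding has_sum_av_def by auto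
next
  case False
  hence c: "av c > 0" by (rule av_pos)
  show ?thesis unfolding has_sum_av_def
  proof (intro allI impI)
    fix e :: real assume "e > 0"
    then obtain F where F: "finite F" "F \<subseteq> I"
      "\<And>G. finite G \<Longrightarrow> F \<subseteq> G \<Longrightarrow> G \<subseteq> I \<Longrightarrow> av (sum g G - L) < e / av c"
      using has_sum_avE[OF assms, of "e / av c"] c by auto
    have "av ((\<Sum>i\<in>G. c * g i) - c * L) < e" if "finite G" "F \<subseteq> G" "G \<subseteq> I" for G
    proof -
      have "(\<Sum>i\<in>G. c * g i) - c * L = c * (sum g G - L)"
        by (simp add: sum_distrib_left right_diff_distrib)
      thus ?thesis using F(3)[OF that] c by (simp add: pos_less_divide_eq mult.commute)
    qed
    thus "\<exists>F. finite F \<and> F \<subseteq> I \<and> (\<forall>G. finite G \<and> F \<subseteq> G \<and> G \<subseteq> I \<longrightarrow> av ((\<Sum>i\<in>G. c * g i) - c * L) < e)"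
      using F(1,2) by blast
  qed
qed

lemma null_family_cmult_right:
  assumes "null_family av g I" shows "null_family av (\<lambda>i. c * g i) I"
proof (cases "c = 0")
  case True thus ?thesis unfolding null_family_def by auto
next
  case False
  hence c: "av c > 0" by (rule av_pos)
  have "{i \<in> I. e \<le> av (c * g i)} = {i \<in> I. e / av c \<le> av (g i)}" for e
    using c by (auto simp: pos_divide_le_eq mult.commute)
  thus ?thesis using null_familyD[OF assms] c unfolding null_family_def by simp
qed

lemma null_family_mult_bounded:
  assumes "null_family av g I" "\<And>i. i \<in> I \<Longrightarrow> av (c i) \<le> 1"
  shows "null_family av (\<lambda>i. c i * g i) I"
  unfolding null_family_def
proof (intro allI impI)
  fix e :: real assume "e > 0"
  moreover have "av (c i) * av (g i) \<le> av (g i)" if "i \<in> I" for i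
    using assms(2)[OF that] mult_right_mono[of "av (c i)" 1 "av (g i)"] by simp
  hence "{i \<in> I. e \<le> av (c i * g i)} \<subseteq> {i \<in> I. e \<le> av (g i)}"
    by force
  ultimately show "finite {i \<in> I. e \<le> av (c i * g i)}"
    using null_familyD[OF assms(1)] finite_subset by blast
qed

lemma has_sum_av_finite_support:
  assumes "finite F" "F \<subseteq> I" "\<And>i. i \<in> I - F \<Longrightarrow> g i = 0"
  shows "has_sum_av av g I (sum g F)"
  unfolding has_sum_av_def
proof (intro allI impI exI[of _ F] conjI)
  fix e :: real and G assume "e > 0" "finite G \<and> F \<subseteq> G \<and> G \<subseteq> I"
  moreover from this have "sum g G = sum g F"
    using assms(3) by (intro sum.mono_neutral_right) auto
  ultimately show "av (sum g G - sum g F) < e" by simp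
qed (use assms in auto)

lemma has_sum_av_finite: "finite I \<Longrightarrow> has_sum_av av g I (sum g I)"
  by (rule has_sum_av_finite_support) auto

lemma infsum_av_finite: "finite I \<Longrightarrow> infsum_av av g I = sum g I"
  using has_sum_av_finite infsum_av_eqI by blast

lemma null_family_finite: "finite I \<Longrightarrow> null_family av g I"
  unfolding null_family_def by auto

lemma null_family_subset:
  assumes "null_family av g I" "J \<subseteq> I" shows "null_family av g J"
proof -
  have "{i \<in> J. e \<le> av (g i)} \<subseteq> {i \<in> I. e \<le> av (g i)}" for e using assms(2) by auto
  thus ?thesis using assms(1) finite_subset unfolding null_family_def by meson
qed

lemma null_family_cong:
  assumes "null_family av g I" "\<And>i. i \<in> I \<Longrightarrow> g i = h i" shows "null_family av h I"
proof -
  have "{i \<in> I. e \<le> av (h i)} = {i \<in> I. e \<le> av (g i)}" for e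
    using assms(2) by auto
  thus ?thesis using assms(1) unfolding null_family_def by simp
qed

lemma has_sum_av_cong:
  assumes "has_sum_av av g I L" "\<And>i. i \<in> I \<Longrightarrow> g i = h i" shows "has_sum_av av h I L"
  unfolding has_sum_av_def
proof (intro allI impI)
  fix e :: real assume "e > 0"
  then obtain F where F: "finite F" "F \<subseteq> I"
    "\<And>G. finite G \<Longrightarrow> F \<subseteq> G \<Longrightarrow> G \<subseteq> I \<Longrightarrow> av (sum g G - L) < e"
    using has_sum_avE[OF assms(1)] by blast
  have "sum g G = sum h G" if "G \<subseteq> I" for G
    using that assms(2) by (intro sum.cong) auto
  thus "\<exists>F. finite F \<and> F \<subseteq> I \<and> (\<forall>G. finite G \<and> F \<subseteq> G \<and> G \<subseteq> I \<longrightarrow> av (sum h G - L) < e)"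
    using F by (intro exI[of _ F]) auto
qed

lemma has_sum_av_add:
  assumes "has_sum_av av g I A" "has_sum_av av h I B"
  shows "has_sum_av av (\<lambda>i. g i + h i) I (A + B)"
  unfolding has_sum_av_def
proof (intro allI impI)
  fix e :: real assume e: "e > 0"
  obtain F1 where F1: "finite F1" "F1 \<subseteq> I"
    "\<And>G. finite G \<Longrightarrow> F1 \<subseteq> G \<Longrightarrow> G \<subseteq> I \<Longrightarrow> av (sum g G - A) < e"
    using has_sum_avE[OF assms(1) e] by blast
  obtain F2 where F2: "finite F2" "F2 \<subseteq> I"
    "\<And>G. finite G \<Longrightarrow> F2 \<subseteq> G \<Longrightarrow> G \<subseteq> I \<Longrightarrow> av (sum h G - B) < e"
    using has_sum_avE[OF assms(2) e] by blast
  have "av ((\<Sum>i\<in>G. g i + h i) - (A + B)) < e" if "finite G" "F1 \<union> F2 \<subseteq> G" "G \<subseteq> I" for G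
  proof -
    have "av ((sum g G - A) + (sum h G - B)) < e"
      using that by (intro av_add_less F1(3) F2(3)) auto
    thus ?thesis by (simp add: sum.distrib algebra_simps)
  qed
  thus "\<exists>F. finite F \<and> F \<subseteq> I \<and> (\<forall>G. finite G \<and> F \<subseteq> G \<and> G \<subseteq> I \<longrightarrow> av ((\<Sum>i\<in>G. g i + h i) - (A + B)) < e)"
    using F1 F2 by (intro exI[of _ "F1 \<union> F2"]) auto
qed

lemma has_sum_av_bound:
  assumes "has_sum_av av g I L" "B \<ge> 0" "\<And>i. i \<in> I \<Longrightarrow> av (g i) \<le> B"
  shows "av L \<le> B"
proof (rule field_le_epsilon)
  fix e :: real assume e: "e > 0"
  obtain F where F: "finite F" "F \<subseteq> I" "av (sum g F - L) < e"
  proof (rule has_sum_avE[OF assms(1) e])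
    fix F assume "finite F" "F \<subseteq> I" "\<And>G. finite G \<Longrightarrow> F \<subseteq> G \<Longrightarrow> G \<subseteq> I \<Longrightarrow> av (sum g G - L) < e"
    thus thesis using that by blast
  qed
  have "av (sum g F) \<le> B" using assms(2,3) F(2) by (intro av_sum_le) auto
  moreover have "av L \<le> max (av (sum g F)) (av (sum g F - L))"
    using av_diff_le_max[of "sum g F" "sum g F - L"] by simp
  ultimately show "av L \<le> B + e" using F(3) e assms(2) by linarith
qed

lemma null_family_bounded:
  assumes "null_family av g I" obtains M where "M > 0" "\<And>i. i \<in> I \<Longrightarrow> av (g i) \<le> M"
proof -
  have fin: "finite {i \<in> I. 1 \<le> av (g i)}" using null_familyD[OF assms] by simp
  define M where "M = Max (insert 1 ((\<lambda>i. av (g i)) ` {i \<in> I. 1 \<le> av (g i)}))"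
  have "M \<ge> 1" unfolding M_def using fin by simp
  moreover have "av (g i) \<le> M" if "i \<in> I" for i
  proof (cases "1 \<le> av (g i)")
    case True thus ?thesis unfolding M_def using fin that by (intro Max_ge) auto
  next
    case False thus ?thesis using \<open>M \<ge> 1\<close> by linarith
  qed
  ultimately show ?thesis using that by force
qed

lemma has_sum_av_reindex:
  assumes "inj_on h I" "has_sum_av av (g \<circ> h) I L" shows "has_sum_av av g (h ` I) L"
  unfolding has_sum_av_def
proof (intro allI impI)
  fix e :: real assume e: "e > 0"
  obtain F where F: "finite F" "F \<subseteq> I"
    "\<And>G. finite G \<Longrightarrow> F \<subseteq> G \<Longrightarrow> G \<subseteq> I \<Longrightarrow> av (sum (g \<circ> h) G - L) < e"
    using has_sum_avE[OF assms(2) e] by blast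
  have "av (sum g G - L) < e" if G: "finite G" "h ` F \<subseteq> G" "G \<subseteq> h ` I" for G
  proof -
    define G' where "G' = {i \<in> I. h i \<in> G}"
    have GG: "G = h ` G'" using G unfolding G'_def by auto
    have inj: "inj_on h G'" using assms(1) unfolding G'_def by (rule inj_on_subset) auto
    have "finite G'" using G(1) GG inj finite_image_iff by metis
    moreover have "F \<subseteq> G'" using G(2) F(2) unfolding G'_def by auto
    ultimately have "av (sum (g \<circ> h) G' - L) < e" using F(3) unfolding G'_def by auto
    thus ?thesis unfolding GG sum.reindex[OF inj] .
  qed
  thus "\<exists>F. finite F \<and> F \<subseteq> h ` I \<and> (\<forall>G. finite G \<and> F \<subseteq> G \<and> G \<subseteq> h ` I \<longrightarrow> av (sum g G - L) < e)"
    using F(1,2) by (intro exI[of _ "h ` F"]) auto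
qed

lemma null_family_reindex_iff:
  assumes "inj_on h I" shows "null_family av (g \<circ> h) I \<longleftrightarrow> null_family av g (h ` I)"
proof -
  have "{y \<in> h ` I. e \<le> av (g y)} = h ` {i \<in> I. e \<le> av (g (h i))}" for e by auto
  moreover have "inj_on h {i \<in> I. e \<le> av (g (h i))}" for e
    using assms by (rule inj_on_subset) auto
  ultimately show ?thesis unfolding null_family_def by (simp add: finite_image_iff)
qed

lemma has_sum_av_approx_superset:
  assumes "has_sum_av av g I L" "e > 0" "finite F0"
  obtains H where "finite H" "F0 \<inter> I \<subseteq> H" "H \<subseteq> I" "av (sum g H - L) < e"
proof -
  obtain F where F: "finite F" "F \<subseteq> I"
    "\<And>G. finite G \<Longrightarrow> F \<subseteq> G \<Longrightarrow> G \<subseteq> I \<Longrightarrow> av (sum g G - L) < e"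
    using has_sum_avE[OF assms(1,2)] by blast
  have "av (sum g (F \<union> (F0 \<inter> I)) - L) < e" using F assms(3) by (intro F(3)) auto
  thus ?thesis using F assms(3) by (intro that[of "F \<union> (F0 \<inter> I)"]) auto
qed

lemma has_sum_av_group:
  assumes null: "null_family av g I" and sum: "has_sum_av av g I L" and J: "\<pi> ` I \<subseteq> J"
  shows "has_sum_av av (\<lambda>j. infsum_av av g {i\<in>I. \<pi> i = j}) J L"
  unfolding has_sum_av_def
proof (intro allI impI)
  fix e :: real assume e: "e > 0"
  define P where "P j = {i\<in>I. \<pi> i = j}" for j
  have sum_P: "has_sum_av av g (P j) (infsum_av av g (P j))" for j
    using null_family_has_sum_av[OF null_family_subset[OF null]] by (auto simp: P_def)
  obtain F0 where F0: "finite F0" "F0 \<subseteq> I"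
    "\<And>G. finite G \<Longrightarrow> F0 \<subseteq> G \<Longrightarrow> G \<subseteq> I \<Longrightarrow> av (sum g G - L) < e"
    using has_sum_avE[OF sum e] by blast
  have "\<exists>H. finite H \<and> F0 \<inter> P j \<subseteq> H \<and> H \<subseteq> P j \<and> av (sum g H - infsum_av av g (P j)) < e" for j
    by (rule has_sum_av_approx_superset[OF sum_P e F0(1)]) blast
  then obtain H where H: "\<And>j. finite (H j)" "\<And>j. F0 \<inter> P j \<subseteq> H j" "\<And>j. H j \<subseteq> P j"
    "\<And>j. av (sum g (H j) - infsum_av av g (P j)) < e"
    by metis
  have "av ((\<Sum>j\<in>G. infsum_av av g (P j)) - L) < e" if G: "finite G" "\<pi> ` F0 \<subseteq> G" for G
  proof -
    define U where "U = (\<Union>j\<in>G. H j)"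
    have "finite U" "U \<subseteq> I" using G(1) H(1,3) by (auto simp: U_def P_def)
    moreover have "F0 \<subseteq> U" using G(2) F0(2) H(2) by (fastforce simp: U_def P_def)
    ultimately have a: "av (sum g U - L) < e" by (intro F0(3))
    have "H j \<inter> H k = {}" if "j \<noteq> k" for j k
      using H(3)[of j] H(3)[of k] that by (auto simp: P_def)
    hence "sum g U = (\<Sum>j\<in>G. sum g (H j))"
      unfolding U_def using G(1) H(1) by (intro sum.UNION_disjoint) auto
    hence "(\<Sum>j\<in>G. infsum_av av g (P j)) - L
        = (\<Sum>j\<in>G. infsum_av av g (P j) - sum g (H j)) + (sum g U - L)"
      by (simp add: sum_subtractf)
    moreover have "av (\<Sum>j\<in>G. infsum_av av g (P j) - sum g (H j)) < e"
      using H(4) e av_minus_commute by (intro av_sum_less) auto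
    ultimately show ?thesis using av_add_less[OF _ a] by (simp add: add_diff_eq)
  qed
  thus "\<exists>F. finite F \<and> F \<subseteq> J \<and> (\<forall>G. finite G \<and> F \<subseteq> G \<and> G \<subseteq> J \<longrightarrow>
          av ((\<Sum>j\<in>G. infsum_av av g {i\<in>I. \<pi> i = j}) - L) < e)"
    using F0(1,2) J by (intro exI[of _ "\<pi> ` F0"]) (auto simp: P_def)
qed

lemma null_family_Times:
  assumes "null_family av g I" "null_family av h J"
  shows "null_family av (\<lambda>(i, j). g i * h j) (I \<times> J)"
  unfolding null_family_def
proof (intro allI impI)
  fix e :: real assume e: "e > 0"
  obtain Mg where Mg: "Mg > 0" "\<And>i. i \<in> I \<Longrightarrow> av (g i) \<le> Mg"
    using null_family_bounded[OF assms(1)] by blast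
  obtain Mh where Mh: "Mh > 0" "\<And>j. j \<in> J \<Longrightarrow> av (h j) \<le> Mh"
    using null_family_bounded[OF assms(2)] by blast
  have "e / Mh \<le> av (g i) \<and> e / Mg \<le> av (h j)"
    if "i \<in> I" "j \<in> J" "e \<le> av (g i) * av (h j)" for i j
  proof -
    have "av (g i) * av (h j) \<le> av (g i) * Mh" "av (g i) * av (h j) \<le> Mg * av (h j)"
      using Mg(2)[OF that(1)] Mh(2)[OF that(2)] by (simp_all add: mult_left_mono mult_right_mono)
    thus ?thesis using that(3) Mg(1) Mh(1) by (simp add: pos_divide_le_eq mult.commute)
  qed
  hence "{ij \<in> I \<times> J. e \<le> av ((\<lambda>(i, j). g i * h j) ij)}
      \<subseteq> {i\<in>I. e / Mh \<le> av (g i)} \<times> {j\<in>J. e / Mg \<le> av (h j)}" by auto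
  moreover have "finite ({i\<in>I. e / Mh \<le> av (g i)} \<times> {j\<in>J. e / Mg \<le> av (h j)})"
    using null_familyD[OF assms(1)] null_familyD[OF assms(2)] e Mg(1) Mh(1) by simp
  ultimately show "finite {ij \<in> I \<times> J. e \<le> av ((\<lambda>(i, j). g i * h j) ij)}"
    by (rule finite_subset)
qed

lemma has_sum_av_Times:
  assumes "null_family av g I" "null_family av h J" "has_sum_av av g I A" "has_sum_av av h J B"
  shows "has_sum_av av (\<lambda>(i, j). g i * h j) (I \<times> J) (A * B)"
proof -
  let ?\<Phi> = "\<lambda>(i, j). g i * h j"
  have null: "null_family av ?\<Phi> (I \<times> J)" by (rule null_family_Times[OF assms(1,2)])
  define L where "L = infsum_av av ?\<Phi> (I \<times> J)"
  have L: "has_sum_av av ?\<Phi> (I \<times> J) L" unfolding L_def by (rule null_family_has_sum_av[OF null])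
  have row: "infsum_av av ?\<Phi> {ij\<in>I \<times> J. fst ij = i} = g i * B" if "i \<in> I" for i
  proof -
    have "has_sum_av av (?\<Phi> \<circ> Pair i) J (g i * B)"
      using has_sum_av_cmult_right[OF assms(4)] by (simp add: o_def)
    hence "has_sum_av av ?\<Phi> (Pair i ` J) (g i * B)" by (rule has_sum_av_reindex[rotated]) (auto simp: inj_on_def)
    moreover have "{ij\<in>I \<times> J. fst ij = i} = Pair i ` J" using that by auto
    ultimately show ?thesis by (simp add: infsum_av_eqI)
  qed
  have "has_sum_av av (\<lambda>i. infsum_av av ?\<Phi> {ij\<in>I \<times> J. fst ij = i}) I L"
    by (rule has_sum_av_group[OF null L]) auto
  hence "has_sum_av av (\<lambda>i. g i * B) I L" by (rule has_sum_av_cong) (simp add: row)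
  moreover have "has_sum_av av (\<lambda>i. g i * B) I (A * B)"
    using has_sum_av_cmult_right[OF assms(3), of B] by (simp add: mult.commute)
  ultimately show ?thesis using L has_sum_av_unique by metis
qed

lemma sums_av_Cauchy_product:
  assumes "sums_av av a A" "sums_av av b B"
  shows "sums_av av (\<lambda>n. \<Sum>k\<le>n. a k * b (n - k)) (A * B)"
proof -
  let ?\<Phi> = "\<lambda>(i, j). a i * b j"
  have null: "null_family av ?\<Phi> (UNIV \<times> UNIV)"
    using null_family_Times[OF sums_av_imp_null_family[OF assms(1)] sums_av_imp_null_family[OF assms(2)]] .
  have sum: "has_sum_av av ?\<Phi> (UNIV \<times> UNIV) (A * B)"
    using has_sum_av_Times[OF sums_av_imp_null_family[OF assms(1)] sums_av_imp_null_family[OF assms(2)]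
        sums_av_imp_has_sum_av[OF assms(1)] sums_av_imp_has_sum_av[OF assms(2)]] .
  have diagonal: "infsum_av av ?\<Phi> {ij\<in>UNIV \<times> UNIV. fst ij + snd ij = n} = (\<Sum>k\<le>n. a k * b (n - k))" for n
  proof -
    have eq: "{ij\<in>UNIV \<times> UNIV. fst ij + snd ij = n} = (\<lambda>k. (k, n - k)) ` {..n}" by force
    have "inj_on (\<lambda>k. (k, n - k)) {..n}" by (auto simp: inj_on_def)
    thus ?thesis unfolding eq by (simp add: infsum_av_finite sum.reindex)
  qed
  have "has_sum_av av (\<lambda>n. \<Sum>k\<le>n. a k * b (n - k)) UNIV (A * B)"
    using has_sum_av_group[OF null sum, of "\<lambda>ij. fst ij + snd ij" UNIV] diagonal by simp
  thus ?thesis by (rule has_sum_av_imp_sums_av)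
qed

lemma sums_av_geometric:
  assumes y: "av y < 1" shows "sums_av av (\<lambda>r. y ^ r) (1 / (1 - y))"
  unfolding sums_av_def conv_av_def
proof (intro allI impI)
  fix e :: real assume e: "e > 0"
  have y1: "y \<noteq> 1" using y by auto
  obtain N where N: "\<And>n. n \<ge> N \<Longrightarrow> av y ^ n < e"
    using power_eventually_less[OF av_nonneg y e] by blast
  have "(\<Sum>r<n. y ^ r) - 1 / (1 - y) = - (y ^ n / (1 - y))" for n
    using y1 by (simp add: sum_gp_strict diff_divide_distrib)
  hence "av ((\<Sum>r<n. y ^ r) - 1 / (1 - y)) < e" if "n \<ge> N" for n
    using N[OF that] av_one_minus[OF y] by simp
  thus "\<exists>N. \<forall>n\<ge>N. av ((\<Sum>r<n. y ^ r) - 1 / (1 - y)) < e" by blast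
qed

lemma sums_av_neg_binomial:
  assumes y: "av y < 1"
  shows "sums_av av (\<lambda>r. of_nat ((n + r - 1) choose r) * y ^ r) (1 / (1 - y) ^ n)"
proof (cases n)
  case 0
  have "has_sum_av av (\<lambda>r. of_nat ((n + r - 1) choose r) * y ^ r) UNIV
      (\<Sum>r\<in>{0}. of_nat ((n + r - 1) choose r) * y ^ r)"
    using 0 by (intro has_sum_av_finite_support) (auto simp: binomial_eq_0)
  thus ?thesis using 0 by (simp add: has_sum_av_imp_sums_av)
next
  case (Suc m)
  have "sums_av av (\<lambda>r. of_nat ((m + r) choose r) * y ^ r) (1 / (1 - y) ^ Suc m)" for m
  proof (induct m)
    case 0 thus ?case using sums_av_geometric[OF y] by simp
  next
    case (Suc m)
    have "(\<Sum>k\<le>r. (of_nat ((m + k) choose k) * y ^ k) * y ^ (r - k))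
        = of_nat ((Suc m + r) choose r) * y ^ r" for r
    proof -
      have "(\<Sum>k\<le>r. (of_nat ((m + k) choose k) * y ^ k) * y ^ (r - k))
          = (\<Sum>k\<le>r. of_nat ((m + k) choose k) * y ^ r)"
        by (intro sum.cong refl) (simp add: mult.assoc power_add[symmetric])
      also have "\<dots> = of_nat ((Suc m + r) choose r) * y ^ r"
        by (simp add: sum_distrib_right[symmetric] sum_choose_lower[symmetric])
      finally show ?thesis .
    qed
    thus ?case using sums_av_Cauchy_product[OF Suc sums_av_geometric[OF y]]
      by (simp add: power_Suc2 field_simps)
  qed
  thus ?thesis using Suc by simp
qed

lemma sums_av_diff:
  assumes "sums_av av c L" "sums_av av d L'"
  shows "sums_av av (\<lambda>k. c k - d k) (L - L')"
  unfolding sums_av_def conv_av_def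
proof (intro allI impI)
  fix e :: real assume e: "e > 0"
  obtain N1 where N1: "\<forall>n\<ge>N1. av ((\<Sum>k<n. c k) - L) < e"
    using assms(1) e unfolding sums_av_def conv_av_def by blast
  obtain N2 where N2: "\<forall>n\<ge>N2. av ((\<Sum>k<n. d k) - L') < e"
    using assms(2) e unfolding sums_av_def conv_av_def by blast
  have "av ((\<Sum>k<n. c k - d k) - (L - L')) < e" if "n \<ge> max N1 N2" for n
  proof -
    have a: "av ((\<Sum>k<n. c k) - L) < e" and b: "av ((\<Sum>k<n. d k) - L') < e"
      using N1 N2 that by auto
    show ?thesis using av_diff_less[OF a b] by (simp add: sum_subtractf algebra_simps)
  qed
  thus "\<exists>N. \<forall>n\<ge>N. av ((\<Sum>k<n. c k - d k) - (L - L')) < e" by blast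
qed

lemma null_family_prod_lists_length:
  assumes "null_family av g UNIV"
  shows "null_family av (\<lambda>xs. prod_list (map g xs)) {xs. length xs = r}"
proof (induct r)
  case 0 thus ?case by (simp add: null_family_finite)
next
  case (Suc r)
  have "null_family av (\<lambda>(x, xs). g x * prod_list (map g xs)) (UNIV \<times> {xs. length xs = r})"
    by (rule null_family_Times[OF assms Suc])
  hence "null_family av ((\<lambda>xs. prod_list (map g xs)) \<circ> (\<lambda>(x, xs). x # xs)) (UNIV \<times> {xs. length xs = r})"
    by (rule null_family_cong) auto
  thus ?case unfolding lists_length_Suc_eq_image
    by (subst null_family_reindex_iff[symmetric]) (auto simp: inj_on_def)
qed

lemma has_sum_av_prod_lists_length:
  assumes "null_family av g UNIV" "has_sum_av av g UNIV S"
  shows "has_sum_av av (\<lambda>xs. prod_list (map g xs)) {xs. length xs = r} (S ^ r)"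
proof (induct r)
  case 0
  have "{xs :: 'a list. length xs = 0} = {[]}" by auto
  thus ?case using has_sum_av_finite[of "{[]}" "\<lambda>xs. prod_list (map g xs)"] by simp
next
  case (Suc r)
  have "has_sum_av av (\<lambda>(x, xs). g x * prod_list (map g xs)) (UNIV \<times> {xs. length xs = r}) (S ^ Suc r)"
    using has_sum_av_Times[OF assms(1) null_family_prod_lists_length[OF assms(1)] assms(2) Suc] by simp
  hence "has_sum_av av ((\<lambda>xs. prod_list (map g xs)) \<circ> (\<lambda>(x, xs). x # xs))
      (UNIV \<times> {xs. length xs = r}) (S ^ Suc r)"
    by (rule has_sum_av_cong) auto
  thus ?case unfolding lists_length_Suc_eq_image
    by (rule has_sum_av_reindex[rotated]) (auto simp: inj_on_def)
qed

lemma null_family_prod_lists: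
  assumes null: "null_family av g UNIV" and M: "\<And>x. av (g x) \<le> M" "M < 1"
  shows "null_family av (\<lambda>xs. prod_list (map g xs)) UNIV"
  unfolding null_family_def
proof (intro allI impI)
  fix e :: real assume e: "e > 0"
  have M0: "0 \<le> M" using M(1)[of undefined] av_nonneg order_trans by blast
  have le_power: "av (prod_list (map g xs)) \<le> M ^ length xs" for xs
    by (induct xs) (auto intro!: mult_mono M(1) simp: M0)
  have le_member: "av (prod_list (map g xs)) \<le> av (g x)" if "x \<in> set xs" for x xs
    using that
  proof (induct xs)
    case (Cons y ys)
    have "av (prod_list (map g ys)) \<le> 1"
      using le_power[of ys] power_le_one[OF M0] M(2) by (meson less_imp_le order_trans)
    moreover have "av (g y) \<le> 1" using M by (meson less_imp_le order_trans)
    ultimately show ?case using Cons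
      by (auto intro: mult_right_le_one_le order_trans[OF mult_left_le_one_le])
  qed simp
  obtain K where K: "\<And>n. n \<ge> K \<Longrightarrow> M ^ n < e" using power_eventually_less[OF M0 M(2) e] by blast
  have "{xs \<in> UNIV. e \<le> av (prod_list (map g xs))}
      \<subseteq> {xs. set xs \<subseteq> {x. e \<le> av (g x)} \<and> length xs \<le> K}"
  proof (rule subsetI)
    fix xs assume "xs \<in> {xs \<in> UNIV. e \<le> av (prod_list (map g xs))}"
    hence big: "e \<le> av (prod_list (map g xs))" by simp
    have "length xs \<le> K"
    proof (rule ccontr)
      assume "\<not> length xs \<le> K"
      thus False using K[of "length xs"] le_power[of xs] big by linarith
    qed
    moreover have "set xs \<subseteq> {x. e \<le> av (g x)}"
      using order_trans[OF big le_member] by blast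
    ultimately show "xs \<in> {xs. set xs \<subseteq> {x. e \<le> av (g x)} \<and> length xs \<le> K}" by simp
  qed
  moreover have "finite {xs. set xs \<subseteq> {x. e \<le> av (g x)} \<and> length xs \<le> K}"
    using null_familyD[OF null e] by (intro finite_lists_length_le) simp
  ultimately show "finite {xs \<in> UNIV. e \<le> av (prod_list (map g xs))}" by (rule finite_subset)
qed

subsection \<open>Uniqueness of local power series expansions\<close>

lemma power_series_lowest_coeff_bound:
  assumes sum0: "has_sum_av av (\<lambda>k. c k * x ^ k) UNIV 0"
    and below: "\<And>k. k < k0 \<Longrightarrow> c k = 0"
    and M: "\<And>k. av (c k) * \<rho> ^ k \<le> M"
    and x: "x \<noteq> 0" "av x \<le> \<rho>"
  shows "av (c k0) * \<rho> ^ Suc k0 \<le> M * av x"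
proof -
  define a where "a = av x"
  have a: "a > 0" "a \<le> \<rho>" using x av_pos unfolding a_def by auto
  have "av (c 0) \<le> M" using M[of 0] by simp
  hence M0: "M \<ge> 0" using av_nonneg[of "c 0"] by linarith
  define d where "d k = (if k = k0 then - (c k0 * x ^ k0) else 0)" for k
  have sum: "has_sum_av av (\<lambda>k. c k * x ^ k + d k) UNIV (0 + sum d {k0})"
    by (intro has_sum_av_add[OF sum0] has_sum_av_finite_support) (auto simp: d_def)
  have bound: "av (c k * x ^ k + d k) \<le> M * (a / \<rho>) ^ Suc k0" for k
  proof (cases "k \<le> k0")
    case True
    hence "c k * x ^ k + d k = 0" using below[of k] by (cases "k = k0") (auto simp: d_def)
    thus ?thesis using M0 a by simp
  next
    case False
    have "av (c k * x ^ k) = (av (c k) * \<rho> ^ k) * (a / \<rho>) ^ k"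
      using a by (simp add: a_def power_divide)
    also have "\<dots> \<le> M * (a / \<rho>) ^ k" using M[of k] a by (intro mult_right_mono) auto
    also have "\<dots> \<le> M * (a / \<rho>) ^ Suc k0" using False a M0
      by (intro mult_left_mono power_decreasing) auto
    finally show ?thesis using False by (simp add: d_def)
  qed
  have "av (0 + sum d {k0}) \<le> M * (a / \<rho>) ^ Suc k0"
    by (rule has_sum_av_bound[OF sum _ bound]) (use M0 a in auto)
  hence "av (c k0) * a ^ k0 * \<rho> ^ Suc k0 \<le> M * a * a ^ k0"
    using a by (simp add: d_def a_def power_divide field_simps)
  thus ?thesis using a unfolding a_def by (simp add: mult.commute mult.left_commute)
qed

lemma power_series_eq_0:
  assumes small: "\<And>r. r > 0 \<Longrightarrow> \<exists>x. x \<noteq> 0 \<and> av x < r"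
    and r: "r > 0" and sums0: "\<And>x. av x < r \<Longrightarrow> sums_av av (\<lambda>k. c k * x ^ k) 0"
  shows "c k = 0"
proof (rule ccontr)
  assume "c k \<noteq> 0"
  define k0 where "k0 = (LEAST k. c k \<noteq> 0)"
  have ck0: "c k0 \<noteq> 0" unfolding k0_def by (rule LeastI) fact
  have below: "c k = 0" if "k < k0" for k using not_less_Least[of k "\<lambda>k. c k \<noteq> 0"] that
    unfolding k0_def by blast
  obtain x1 where x1: "x1 \<noteq> 0" "av x1 < r" using small[OF r] by blast
  define \<rho> where "\<rho> = av x1"
  have \<rho>: "\<rho> > 0" "\<rho> < r" using x1 av_pos unfolding \<rho>_def by auto
  obtain M where M: "M > 0" "\<And>k. k \<in> UNIV \<Longrightarrow> av (c k * x1 ^ k) \<le> M"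
    using null_family_bounded[OF sums_av_imp_null_family[OF sums0[OF x1(2)]]] by metis
  define C where "C = av (c k0) * \<rho> ^ Suc k0"
  have C: "C > 0" using ck0 av_pos \<rho> unfolding C_def by simp
  obtain x where x: "x \<noteq> 0" "av x < min \<rho> (C / M)" using small[of "min \<rho> (C / M)"] \<rho> C M by auto
  have "C \<le> M * av x"
    unfolding C_def using x \<rho> M(2)
    by (intro power_series_lowest_coeff_bound[OF sums_av_imp_has_sum_av below])
       (auto intro!: sums0 simp: \<rho>_def)
  moreover have "M * av x < C" using x M(1) by (simp add: field_simps)
  ultimately show False by simp
qed

lemma local_exp_unique:
  assumes small: "\<And>r. r > 0 \<Longrightarrow> \<exists>x. x \<noteq> 0 \<and> av x < r"
    and "local_exp av f z c" "local_exp av f z d"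
  shows "c = d"
proof -
  obtain r1 where r1: "r1 > 0" "\<And>e. av e < r1 \<Longrightarrow> sums_av av (\<lambda>n. c n * e ^ n) (f (z + e))"
    using assms(2) unfolding local_exp_def by blast
  obtain r2 where r2: "r2 > 0" "\<And>e. av e < r2 \<Longrightarrow> sums_av av (\<lambda>n. d n * e ^ n) (f (z + e))"
    using assms(3) unfolding local_exp_def by blast
  have "c k - d k = 0" for k
  proof (rule power_series_eq_0[OF small])
    show "min r1 r2 > 0" using r1 r2 by simp
    fix x assume "av x < min r1 r2"
    hence "sums_av av (\<lambda>n. c n * x ^ n - d n * x ^ n) (f (z + x) - f (z + x))"
      using r1 r2 by (intro sums_av_diff) auto
    thus "sums_av av (\<lambda>k. (c k - d k) * x ^ k) 0" by (simp add: left_diff_distrib)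
  qed
  thus ?thesis by auto
qed

end

section \<open>Substituting a null family into a series in powers of \<open>1 / (1 - G)\<close>\<close>

text \<open>With \<open>G = \<Sum>\<^sub>x g x\<close>, expanding \<open>(1 - G)^(-n) = \<Sum>\<^sub>r (n+r-1 choose r) G^r\<close> and \<open>G^r\<close> as a
  sum over the lists of length \<open>r\<close> turns \<open>\<Sum>\<^sub>n A n (1 - G)^(-n)\<close> into a sum over pairs
  \<open>(n, xs)\<close>.\<close>
definition neg_power_term :: "(nat \<Rightarrow> 'c::field) \<Rightarrow> ('a \<Rightarrow> 'c) \<Rightarrow> nat \<times> 'a list \<Rightarrow> 'c" where
  "neg_power_term A g = (\<lambda>(n, xs). A n * (of_nat ((n + length xs - 1) choose length xs) * prod_list (map g xs)))"

context nonarch_field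
begin

lemma null_family_binomial_lists:
  assumes "null_family av g UNIV" "\<And>x. av (g x) \<le> M" "M < 1"
  shows "null_family av (\<lambda>xs. of_nat ((n + length xs - 1) choose length xs) * prod_list (map g xs)) UNIV"
  using null_family_prod_lists[OF assms] av_of_nat_le_1 by (rule null_family_mult_bounded)

lemma has_sum_av_binomial_lists:
  assumes null: "null_family av g UNIV" and sum: "has_sum_av av g UNIV G"
    and M: "\<And>x. av (g x) \<le> M" "M < 1"
  shows "has_sum_av av (\<lambda>xs. of_nat ((n + length xs - 1) choose length xs) * prod_list (map g xs))
           UNIV (1 / (1 - G) ^ n)"
proof -
  let ?\<phi> = "\<lambda>xs. of_nat ((n + length xs - 1) choose length xs) * prod_list (map g xs)"
  have null_\<phi>: "null_family av ?\<phi> UNIV" by (rule null_family_binomial_lists[OF null M])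
  have "av G \<le> M" using M(1) order_trans[OF av_nonneg M(1)] by (intro has_sum_av_bound[OF sum]) auto
  hence G: "av G < 1" using M(2) by linarith
  have "has_sum_av av (?\<phi>) {xs. length xs = r} (of_nat ((n + r - 1) choose r) * G ^ r)" for r
    using has_sum_av_cmult_right[OF has_sum_av_prod_lists_length[OF null sum]]
    by (rule has_sum_av_cong) simp
  hence "infsum_av av ?\<phi> {xs \<in> UNIV. length xs = r} = of_nat ((n + r - 1) choose r) * G ^ r" for r
    by (simp add: infsum_av_eqI)
  hence "has_sum_av av (\<lambda>r. of_nat ((n + r - 1) choose r) * G ^ r) UNIV (infsum_av av ?\<phi> UNIV)"
    using has_sum_av_group[OF null_\<phi> null_family_has_sum_av[OF null_\<phi>], of length UNIV] by simp
  moreover have "has_sum_av av (\<lambda>r. of_nat ((n + r - 1) choose r) * G ^ r) UNIV (1 / (1 - G) ^ n)"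
    by (rule sums_av_imp_has_sum_av[OF sums_av_neg_binomial[OF G]])
  ultimately have "infsum_av av ?\<phi> UNIV = 1 / (1 - G) ^ n" by (rule has_sum_av_unique)
  thus ?thesis using null_family_has_sum_av[OF null_\<phi>] by simp
qed

lemma null_family_neg_power_term:
  assumes "null_family av A UNIV" "null_family av g UNIV" "\<And>x. av (g x) \<le> M" "M < 1"
  shows "null_family av (neg_power_term A g) UNIV"
proof -
  define c :: "nat \<times> 'a list \<Rightarrow> 'c"
    where "c nxs = of_nat ((fst nxs + length (snd nxs) - 1) choose length (snd nxs))" for nxs
  have "null_family av (\<lambda>(n, xs). A n * prod_list (map g xs)) UNIV"
    using null_family_Times[OF assms(1) null_family_prod_lists[OF assms(2-4)]] by simp
  hence "null_family av (\<lambda>nxs. c nxs * (\<lambda>(n, xs). A n * prod_list (map g xs)) nxs) UNIV"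
    by (rule null_family_mult_bounded) (simp add: c_def av_of_nat_le_1)
  thus ?thesis by (rule null_family_cong) (auto simp: neg_power_term_def c_def)
qed

lemma has_sum_av_neg_power_term:
  assumes nullA: "null_family av A UNIV" and null: "null_family av g UNIV"
    and sum: "has_sum_av av g UNIV G" and M: "\<And>x. av (g x) \<le> M" "M < 1"
    and S: "sums_av av (\<lambda>n. A n * (1 / (1 - G) ^ n)) S"
  shows "has_sum_av av (neg_power_term A g) UNIV S"
proof -
  have null_\<Phi>: "null_family av (neg_power_term A g) UNIV"
    by (rule null_family_neg_power_term[OF nullA null M])
  have row: "infsum_av av (neg_power_term A g) {nxs \<in> UNIV. fst nxs = n} = A n * (1 / (1 - G) ^ n)" for n
  proof -
    have "has_sum_av av (neg_power_term A g \<circ> Pair n) UNIV (A n * (1 / (1 - G) ^ n))"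
      using has_sum_av_cmult_right[OF has_sum_av_binomial_lists[OF null sum M, of n], of "A n"]
      by (simp add: neg_power_term_def o_def)
    hence "has_sum_av av (neg_power_term A g) (Pair n ` UNIV) (A n * (1 / (1 - G) ^ n))"
      by (rule has_sum_av_reindex[rotated]) (auto simp: inj_on_def)
    moreover have "{nxs \<in> UNIV. fst nxs = n} = Pair n ` UNIV" by auto
    ultimately show ?thesis using infsum_av_eqI by metis
  qed
  have "has_sum_av av (\<lambda>n. A n * (1 / (1 - G) ^ n)) UNIV (infsum_av av (neg_power_term A g) UNIV)"
    using has_sum_av_group[OF null_\<Phi> null_family_has_sum_av[OF null_\<Phi>], of fst UNIV] row by simp
  hence "infsum_av av (neg_power_term A g) UNIV = S"
    using sums_av_imp_has_sum_av[OF S] by (rule has_sum_av_unique)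
  thus ?thesis using null_family_has_sum_av[OF null_\<Phi>] by simp
qed

lemma local_exp_of_graded_family:
  assumes small: "\<And>r. r > 0 \<Longrightarrow> \<exists>x. x \<noteq> 0 \<and> av x < r" and r: "r > 0"
    and null: "\<And>\<epsilon>. av \<epsilon> < r \<Longrightarrow> null_family av (\<lambda>j. \<epsilon> ^ w j * \<Psi> j) UNIV"
    and sum: "\<And>\<epsilon>. av \<epsilon> < r \<Longrightarrow> has_sum_av av (\<lambda>j. \<epsilon> ^ w j * \<Psi> j) UNIV (f (z + \<epsilon>))"
  shows "null_family av \<Psi> {j. w j = k}"
    and "local_exp av f z (\<lambda>k. infsum_av av \<Psi> {j. w j = k})"
proof -
  obtain \<epsilon>0 where \<epsilon>0: "\<epsilon>0 \<noteq> 0" "av \<epsilon>0 < r" using small[OF r] by blast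
  have null_k: "null_family av \<Psi> {j. w j = k}" for k
  proof -
    have "null_family av (\<lambda>j. \<epsilon>0 ^ w j * \<Psi> j) {j. w j = k}"
      by (rule null_family_subset[OF null[OF \<epsilon>0(2)]]) simp
    hence "null_family av (\<lambda>j. (1 / \<epsilon>0 ^ k) * (\<epsilon>0 ^ w j * \<Psi> j)) {j. w j = k}"
      by (rule null_family_cmult_right)
    thus ?thesis by (rule null_family_cong) (use \<epsilon>0(1) in simp)
  qed
  thus "null_family av \<Psi> {j. w j = k}" .
  have "sums_av av (\<lambda>k. infsum_av av \<Psi> {j. w j = k} * \<epsilon> ^ k) (f (z + \<epsilon>))" if \<epsilon>: "av \<epsilon> < r" for \<epsilon>
  proof -
    have "has_sum_av av (\<lambda>j. \<epsilon> ^ w j * \<Psi> j) {j. w j = k} (\<epsilon> ^ k * infsum_av av \<Psi> {j. w j = k})" for k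
      using has_sum_av_cmult_right[OF null_family_has_sum_av[OF null_k], of "\<epsilon> ^ k"]
      by (rule has_sum_av_cong) simp
    hence "infsum_av av (\<lambda>j. \<epsilon> ^ w j * \<Psi> j) {j \<in> UNIV. w j = k} = \<epsilon> ^ k * infsum_av av \<Psi> {j. w j = k}" for k
      by (simp add: infsum_av_eqI)
    hence "has_sum_av av (\<lambda>k. \<epsilon> ^ k * infsum_av av \<Psi> {j. w j = k}) UNIV (f (z + \<epsilon>))"
      using has_sum_av_group[OF null[OF \<epsilon>] sum[OF \<epsilon>], of w UNIV] by simp
    thus ?thesis by (simp add: has_sum_av_imp_sums_av mult.commute)
  qed
  thus "local_exp av f z (\<lambda>k. infsum_av av \<Psi> {j. w j = k})"
    unfolding local_exp_def using r by blast
qed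

end

section \<open>The Carlitz exponential\<close>

locale carlitz_field = nonarch_field av for av :: "'c::field \<Rightarrow> real" +
  fixes q :: nat and T :: 'c
  assumes q_ge_2: "q \<ge> 2" and av_T_gt_1: "av T > 1"
    and frobenius: "(x + y :: 'c) ^ q = x ^ q + y ^ q"
begin

lemma frobenius_power: "(x + y :: 'c) ^ (q ^ n) = x ^ (q ^ n) + y ^ (q ^ n)"
proof (induct n)
  case (Suc n)
  have pw: "w ^ (q ^ Suc n) = (w ^ (q ^ n)) ^ q" for w :: 'c
    by (metis power_Suc2 power_mult)
  show ?case by (simp only: pw Suc frobenius)
qed simp

lemma less_q_power: "n < q ^ n"
  using less_exp[of n] power_mono[OF q_ge_2, of n] by linarith

lemma av_brk: "i \<ge> 1 \<Longrightarrow> av (brk q T i) = av T ^ (q ^ i)"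
proof -
  assume "i \<ge> 1"
  hence "av (- T) < av (T ^ (q ^ i))"
    using less_q_power[of i] av_T_gt_1 power_strict_increasing[of 1 "q ^ i" "av T"] by simp
  thus ?thesis using av_add_eq_left[of "- T" "T ^ (q ^ i)"] by (simp add: brk_def)
qed

lemma av_dd: "av (dd q T n) = av T ^ (n * q ^ n)"
proof (induct n)
  case (Suc n)
  have "av (dd q T (Suc n)) = av T ^ (q ^ Suc n + n * q ^ n * q)"
    using Suc av_brk[of "Suc n"] by (simp add: power_add power_mult)
  thus ?case by (simp add: algebra_simps)
qed simp

lemma av_dd_ge_1: "av (dd q T n) \<ge> 1"
  unfolding av_dd using av_T_gt_1 by (intro one_le_power) auto

definition eC_term :: "'c \<Rightarrow> nat \<Rightarrow> 'c" where
  "eC_term x n = x ^ (q ^ n) / dd q T n"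

lemma null_family_eC_term: "null_family av (eC_term x) UNIV"
proof (rule null_family_natI)
  fix e :: real assume e: "e > 0"
  obtain N1 where N1: "2 * av x < av T ^ N1" using real_arch_pow[OF av_T_gt_1] by blast
  obtain N2 where N2: "\<And>n. n \<ge> N2 \<Longrightarrow> (1/2 :: real) ^ n < e"
    using power_eventually_less[of "1/2" e] e by auto
  have "av (eC_term x n) < e" if n: "n \<ge> max N1 N2" for n
  proof -
    define \<rho> where "\<rho> = av x / av T ^ n"
    have "av T ^ N1 \<le> av T ^ n" using av_T_gt_1 n by (intro power_increasing) auto
    hence "2 * av x \<le> av T ^ n" using N1 by linarith
    hence \<rho>: "0 \<le> \<rho>" "\<rho> \<le> 1/2" using av_T_gt_1 by (auto simp: \<rho>_def divide_le_eq)
    have "av (eC_term x n) = \<rho> ^ (q ^ n)"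
      by (simp add: eC_term_def \<rho>_def av_dd power_divide power_mult)
    also have "\<dots> \<le> (1/2) ^ (q ^ n)" using \<rho> by (intro power_mono) auto
    also have "\<dots> \<le> (1/2) ^ n" using less_q_power[of n] by (intro power_decreasing) auto
    also have "\<dots> < e" using N2 n by auto
    finally show ?thesis .
  qed
  thus "\<exists>N. \<forall>n\<ge>N. av (eC_term x n) < e" by blast
qed

lemma has_sum_av_eC: "has_sum_av av (eC_term x) UNIV (eC av q T x)"
proof -
  have "sums_av av (eC_term x) (infsum_av av (eC_term x) UNIV)"
    by (rule has_sum_av_imp_sums_av[OF null_family_has_sum_av[OF null_family_eC_term]])
  hence "eC av q T x = infsum_av av (eC_term x) UNIV"
    unfolding eC_def sums_av_def eC_term_def by (rule lim_av_eqI)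
  thus ?thesis using null_family_has_sum_av[OF null_family_eC_term] by simp
qed

lemma eC_add: "eC av q T (x + y) = eC av q T x + eC av q T y"
proof -
  have "has_sum_av av (\<lambda>n. eC_term x n + eC_term y n) UNIV (eC av q T x + eC av q T y)"
    by (rule has_sum_av_add[OF has_sum_av_eC has_sum_av_eC])
  moreover have "(\<lambda>n. eC_term x n + eC_term y n) = eC_term (x + y)"
    by (simp add: fun_eq_iff eC_term_def frobenius_power add_divide_distrib)
  ultimately show ?thesis using has_sum_av_eC has_sum_av_unique by metis
qed

lemma eC_0: "eC av q T 0 = 0"
  using eC_add[of 0 0] by (metis add.right_neutral add_left_cancel)

lemma av_eC_term_le:
  assumes "av x \<le> 1" shows "av (eC_term x n) \<le> av x"
proof -
  have "av (eC_term x n) = av x ^ (q ^ n) / av (dd q T n)" by (simp add: eC_term_def)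
  also have "\<dots> \<le> av x ^ (q ^ n) / 1" using av_dd_ge_1[of n] by (intro divide_left_mono) auto
  also have "\<dots> = av x ^ (q ^ n)" by simp
  also have "\<dots> \<le> av x ^ 1" using assms q_ge_2 by (intro power_decreasing) auto
  finally show ?thesis by simp
qed

lemma exists_nonzero_av_less: "r > 0 \<Longrightarrow> \<exists>x. x \<noteq> 0 \<and> av x < r"
proof -
  assume r: "r > 0"
  obtain n where n: "1 / r < av T ^ n" using real_arch_pow[OF av_T_gt_1] by blast
  have "T \<noteq> 0" using av_T_gt_1 by auto
  moreover have "av (inverse (T ^ n)) < r" using n r av_T_gt_1 by (simp add: field_simps)
  ultimately show ?thesis by (intro exI[of _ "inverse (T ^ n)"]) simp
qed

lemma zero_in_Kinf: "0 \<in> Kinf av q T"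
proof -
  have "sums_av av (\<lambda>k. 0 * T ^ 0 / T ^ k) 0" unfolding sums_av_def conv_av_def by simp
  moreover have "0 \<in> Fq q" using q_ge_2 by (simp add: Fq_def)
  ultimately show ?thesis unfolding Kinf_def mem_Collect_eq
    by (intro exI[of _ 0] exI[of _ "\<lambda>k. 0"]) simp
qed

lemma Aring_subset_Kinf: "Aring q T \<subseteq> Kinf av q T"
proof
  fix b assume "b \<in> Aring q T"
  then obtain n c where b: "b = (\<Sum>k<n. c k * T ^ k)" and c: "\<forall>k. c k \<in> Fq q"
    unfolding Aring_def by blast
  have T0: "T \<noteq> 0" using av_T_gt_1 by auto
  define d where "d j = (if 1 \<le> j \<and> j \<le> n then c (n - j) else 0)" for j
  have d: "\<forall>j. d j \<in> Fq q" using c q_ge_2 by (simp add: d_def Fq_def)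
  have "has_sum_av av (\<lambda>j. d j * T ^ n / T ^ j) UNIV (\<Sum>j\<in>{1..n}. d j * T ^ n / T ^ j)"
    by (rule has_sum_av_finite_support) (auto simp: d_def)
  moreover have "(\<Sum>j\<in>{1..n}. d j * T ^ n / T ^ j) = b"
  proof -
    have "(\<Sum>j\<in>{1..n}. d j * T ^ n / T ^ j) = (\<Sum>k<n. d (n - k) * T ^ n / T ^ (n - k))"
      by (rule sum.reindex_bij_witness[of _ "\<lambda>k. n - k" "\<lambda>j. n - j"]) auto
    also have "\<dots> = b" unfolding b
    proof (rule sum.cong[OF refl])
      fix k assume "k \<in> {..<n}"
      hence "T ^ n = T ^ k * T ^ (n - k)" "n - (n - k) = k" by (auto simp: power_add[symmetric])
      thus "d (n - k) * T ^ n / T ^ (n - k) = c k * T ^ k" using T0 \<open>k \<in> {..<n}\<close> by (simp add: d_def)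
    qed
    finally show ?thesis .
  qed
  ultimately have "sums_av av (\<lambda>j. d j * T ^ n / T ^ j) b" by (simp add: has_sum_av_imp_sums_av)
  thus "b \<in> Kinf av q T" unfolding Kinf_def using d by blast
qed

lemma bdd_below_absi_set: "bdd_below {av (z - x) | x. x \<in> Kinf av q T}"
  by (rule bdd_belowI[of _ 0]) auto

lemma absi_nonpos_if_Kinf: "z \<in> Kinf av q T \<Longrightarrow> absi av q T z \<le> 0"
  unfolding absi_def using bdd_below_absi_set by (intro cInf_lower) force+

text \<open>Strict triangle inequality: \<open>|z - x + \<epsilon>| = |z - x|\<close> for every \<open>x \<in> K\<^sub>\<infinity>\<close>,
  as \<open>|\<epsilon>| < |z|\<^sub>i \<le> |z - x|\<close>.\<close>
lemma absi_le_absi_add: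
  assumes "av \<epsilon> < absi av q T z" shows "absi av q T z \<le> absi av q T (z + \<epsilon>)"
  unfolding absi_def[of av q T "z + \<epsilon>"]
proof (rule cInf_greatest)
  show "{av (z + \<epsilon> - x) | x. x \<in> Kinf av q T} \<noteq> {}" using zero_in_Kinf by blast
  fix y assume "y \<in> {av (z + \<epsilon> - x) | x. x \<in> Kinf av q T}"
  then obtain x where x: "x \<in> Kinf av q T" "y = av (z + \<epsilon> - x)" by blast
  have le: "absi av q T z \<le> av (z - x)"
    unfolding absi_def using x(1) bdd_below_absi_set by (intro cInf_lower) auto
  hence "av ((z - x) + \<epsilon>) = av (z - x)" using assms by (intro av_add_eq_left) linarith
  thus "absi av q T z \<le> y" using x(2) le by (simp add: algebra_simps)
qed

lemma eC_nonzero_off_Kinf: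
  assumes kernel: "\<forall>z. eC av q T z = 0 \<longleftrightarrow> (\<exists>b\<in>Aring q T. z = pibar * b)"
    and "pibar \<noteq> 0" and "absi av q T z > 0"
  shows "eC av q T (pibar * z) \<noteq> 0"
proof
  assume "eC av q T (pibar * z) = 0"
  then obtain b where "b \<in> Aring q T" "pibar * z = pibar * b" using kernel by blast
  hence "z \<in> Kinf av q T" using Aring_subset_Kinf \<open>pibar \<noteq> 0\<close> by auto
  thus False using absi_nonpos_if_Kinf \<open>absi av q T z > 0\<close> by fastforce
qed

lemma tfun_add:
  assumes u: "eC av q T (pibar * z) \<noteq> 0"
    and w: "1 + tfun av q T pibar z * eC av q T (pibar * \<epsilon>) \<noteq> 0"
  shows "tfun av q T pibar (z + \<epsilon>)
    = tfun av q T pibar z / (1 + tfun av q T pibar z * eC av q T (pibar * \<epsilon>))"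
proof -
  have "eC av q T (pibar * (z + \<epsilon>)) = eC av q T (pibar * z) + eC av q T (pibar * \<epsilon>)"
    by (simp add: distrib_left eC_add)
  thus ?thesis using u w by (simp add: tfun_def field_simps)
qed

section \<open>Expanding \<open>f(z + \<epsilon>)\<close> in powers of \<open>\<epsilon>\<close>\<close>

definition weight :: "nat list \<Rightarrow> nat" where
  "weight xs = sum_list (map (\<lambda>j. q ^ j) xs)"

text \<open>Summed over the pairs \<open>(n, [i\<^sub>1, \<dots>, i\<^sub>r])\<close> of weight \<open>k\<close>, this gives the coefficient
  \<open>\<D>\<^sub>k f(z)\<close> of the expansion of \<open>f\<close> at \<open>z\<close>, where \<open>t = t(z)\<close>.\<close>
definition expansion_term :: "(nat \<Rightarrow> 'c) \<Rightarrow> 'c \<Rightarrow> 'c \<Rightarrow> nat \<times> nat list \<Rightarrow> 'c" where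
  "expansion_term a t pibar = neg_power_term (\<lambda>n. a n * t ^ n) (\<lambda>j. - t * pibar ^ (q ^ j) / dd q T j)"

lemma prod_list_power_weight:
  fixes \<epsilon> :: 'c
  shows "prod_list (map (\<lambda>j. \<epsilon> ^ (q ^ j) * h j) xs) = \<epsilon> ^ weight xs * prod_list (map h xs)"
  by (induct xs) (simp_all add: weight_def power_add mult_ac)

lemma expansion_term_shift:
  "neg_power_term (\<lambda>n. a n * t ^ n) (\<lambda>j. - t * eC_term (pibar * \<epsilon>) j) nxs
    = \<epsilon> ^ weight (snd nxs) * expansion_term a t pibar nxs"
proof -
  have eq: "(\<lambda>j. - t * eC_term (pibar * \<epsilon>) j) = (\<lambda>j. \<epsilon> ^ (q ^ j) * (- t * pibar ^ (q ^ j) / dd q T j))"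
    by (simp add: fun_eq_iff eC_term_def power_mult_distrib)
  show ?thesis
    unfolding eq expansion_term_def neg_power_term_def prod_list_power_weight
    by (simp add: mult_ac split: prod.split)
qed

lemma has_sum_av_expansion_term_shift:
  assumes u: "eC av q T (pibar * z) \<noteq> 0" and t: "t = tfun av q T pibar z"
    and \<epsilon>: "av (pibar * \<epsilon>) * (1 + av t) \<le> 1/2"
    and at_z: "sums_av av (\<lambda>n. a n * t ^ n) S0"
    and at_z\<epsilon>: "sums_av av (\<lambda>n. a n * tfun av q T pibar (z + \<epsilon>) ^ n) S"
  shows "null_family av (\<lambda>nxs. \<epsilon> ^ weight (snd nxs) * expansion_term a t pibar nxs) UNIV"
    and "has_sum_av av (\<lambda>nxs. \<epsilon> ^ weight (snd nxs) * expansion_term a t pibar nxs) UNIV S"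
proof -
  define g where "g j = - t * eC_term (pibar * \<epsilon>) j" for j
  define G where "G = - t * eC av q T (pibar * \<epsilon>)"
  have null_g: "null_family av g UNIV"
    unfolding g_def by (rule null_family_cmult_right[OF null_family_eC_term])
  have sum_g: "has_sum_av av g UNIV G"
    unfolding g_def G_def by (rule has_sum_av_cmult_right[OF has_sum_av_eC])
  have "av (pibar * \<epsilon>) + av (pibar * \<epsilon>) * av t \<le> 1/2"
    using \<epsilon>[unfolded distrib_left mult_1_right] .
  moreover have "0 \<le> av (pibar * \<epsilon>) * av t" by (rule mult_nonneg_nonneg) simp_all
  ultimately have "av (pibar * \<epsilon>) \<le> 1" "av (pibar * \<epsilon>) * av t \<le> 1/2"
    using av_nonneg[of "pibar * \<epsilon>"] by linarith+
  hence g_le: "av (g j) \<le> 1/2" for j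
    using mult_left_mono[OF av_eC_term_le, of "pibar * \<epsilon>" "av t" j]
    by (simp add: g_def mult.commute)
  have "av G \<le> 1/2" by (rule has_sum_av_bound[OF sum_g _ g_le]) simp
  hence G: "1 - G \<noteq> 0" using av_one_minus[of G] by force
  have "tfun av q T pibar (z + \<epsilon>) = t / (1 - G)"
    using tfun_add[OF u] G by (simp add: t G_def)
  hence "sums_av av (\<lambda>n. a n * t ^ n * (1 / (1 - G) ^ n)) S"
    using at_z\<epsilon> by (simp add: power_divide)
  hence "has_sum_av av (neg_power_term (\<lambda>n. a n * t ^ n) g) UNIV S"
    using has_sum_av_neg_power_term[OF sums_av_imp_null_family[OF at_z] null_g sum_g g_le] by simp
  moreover have "null_family av (neg_power_term (\<lambda>n. a n * t ^ n) g) UNIV"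
    using null_family_neg_power_term[OF sums_av_imp_null_family[OF at_z] null_g g_le] by simp
  ultimately show "null_family av (\<lambda>nxs. \<epsilon> ^ weight (snd nxs) * expansion_term a t pibar nxs) UNIV"
    and "has_sum_av av (\<lambda>nxs. \<epsilon> ^ weight (snd nxs) * expansion_term a t pibar nxs) UNIV S"
    unfolding g_def expansion_term_shift by simp_all
qed

lemma local_exp_expansion_term:
  assumes u: "eC av q T (pibar * z) \<noteq> 0" and pibar: "pibar \<noteq> 0"
    and f: "\<And>w. absi av q T w \<ge> R \<Longrightarrow> sums_av av (\<lambda>n. a n * tfun av q T pibar w ^ n) (f w)"
    and zR: "absi av q T z \<ge> R" and z: "absi av q T z > 0"
  defines "t \<equiv> tfun av q T pibar z"
  shows "null_family av (expansion_term a t pibar) {nxs. weight (snd nxs) = k}"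
    and "local_exp av f z (\<lambda>k. infsum_av av (expansion_term a t pibar) {nxs. weight (snd nxs) = k})"
proof -
  have pos: "0 < 2 * (1 + av t) * av pibar" using pibar by (simp add: av_pos add_pos_nonneg)
  define r where "r = min (absi av q T z) (1 / (2 * (1 + av t) * av pibar))"
  have r: "r > 0" using z pos by (simp add: r_def)
  have shift: "null_family av (\<lambda>nxs. \<epsilon> ^ weight (snd nxs) * expansion_term a t pibar nxs) UNIV
      \<and> has_sum_av av (\<lambda>nxs. \<epsilon> ^ weight (snd nxs) * expansion_term a t pibar nxs) UNIV (f (z + \<epsilon>))"
    if \<epsilon>: "av \<epsilon> < r" for \<epsilon>
  proof -
    have "absi av q T z \<le> absi av q T (z + \<epsilon>)" using \<epsilon> by (intro absi_le_absi_add) (simp add: r_def)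
    hence at_z\<epsilon>: "sums_av av (\<lambda>n. a n * tfun av q T pibar (z + \<epsilon>) ^ n) (f (z + \<epsilon>))"
      using zR by (intro f) linarith
    have "av \<epsilon> * (2 * (1 + av t) * av pibar) < 1"
      using \<epsilon> pos by (simp add: r_def pos_less_divide_eq)
    hence "av (pibar * \<epsilon>) * (1 + av t) \<le> 1/2" by (simp add: algebra_simps)
    from has_sum_av_expansion_term_shift[OF u meta_eq_to_obj_eq[OF t_def] this
        f[OF zR, folded t_def] at_z\<epsilon>]
    show ?thesis by blast
  qed
  note graded = local_exp_of_graded_family[OF exists_nonzero_av_less r, of "\<lambda>nxs. weight (snd nxs)"]
  show "null_family av (expansion_term a t pibar) {nxs. weight (snd nxs) = k}"
    using graded(1) shift by blast
  show "local_exp av f z (\<lambda>k. infsum_av av (expansion_term a t pibar) {nxs. weight (snd nxs) = k})"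
    using graded(2) shift by blast
qed

section \<open>The coefficient of \<open>\<epsilon>\<^sup>i\<close> as a series in \<open>t\<close>\<close>

lemma length_le_weight: "length xs \<le> weight xs"
proof (induct xs)
  case (Cons j xs)
  have "1 \<le> q ^ j" using q_ge_2 by simp
  thus ?case using Cons by (simp add: weight_def)
qed (simp add: weight_def)

lemma q_power_le_weight: "j \<in> set xs \<Longrightarrow> q ^ j \<le> weight xs"
  by (induct xs) (auto simp: weight_def)

lemma finite_weight_eq: "finite {xs. weight xs = i}"
proof (rule finite_subset)
  have "j \<le> weight xs" if "j \<in> set xs" for j xs
    using less_q_power[of j] q_power_le_weight[OF that] by linarith
  thus "{xs. weight xs = i} \<subseteq> {xs. set xs \<subseteq> {..i} \<and> length xs \<le> i}"
    using length_le_weight by auto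
  show "finite {xs. set xs \<subseteq> {..i} \<and> length xs \<le> i}" by (rule finite_lists_length_le) simp
qed

lemma prod_list_expansion_factor:
  "prod_list (map (\<lambda>j. c * b ^ (q ^ j) / dd q T j) xs)
    = c ^ length xs * b ^ weight xs / prod_list (map (dd q T) xs)"
  by (induct xs) (simp_all add: weight_def power_add mult_ac)

lemma bcoef_eq_sum_atMost:
  assumes "i \<ge> 1"
  shows "bcoef q T a i m = (\<Sum>r\<le>m. (-1) ^ (i + r) * of_nat ((m - 1) choose r)
    * (\<Sum>xs | length xs = r \<and> weight xs = i. 1 / prod_list (map (dd q T) xs)) * a (m - r))"
  unfolding bcoef_def weight_def
proof (rule sum.mono_neutral_left)
  show "\<forall>r\<in>{..m} - {1..m - 1}. (-1) ^ (i + r) * of_nat ((m - 1) choose r)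
      * (\<Sum>xs | length xs = r \<and> sum_list (map ((^) q) xs) = i. 1 / prod_list (map (dd q T) xs))
      * a (m - r) = 0"
  proof
    fix r assume "r \<in> {..m} - {1..m - 1}"
    hence "r = 0 \<or> (r = m \<and> m \<ge> 1)" by auto
    thus "(-1) ^ (i + r) * of_nat ((m - 1) choose r)
      * (\<Sum>xs | length xs = r \<and> sum_list (map ((^) q) xs) = i. 1 / prod_list (map (dd q T) xs))
      * a (m - r) = 0"
    proof
      assume "r = 0"
      hence "{xs. length xs = r \<and> sum_list (map ((^) q) xs) = i} = {}" using assms by auto
      hence "(\<Sum>xs | length xs = r \<and> sum_list (map ((^) q) xs) = i. 1 / prod_list (map (dd q T) xs)) = 0"
        by (metis sum.empty)
      thus ?thesis by simp
    qed (simp add: binomial_eq_0)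
  qed
qed auto

lemma minus_power_sign: "(- x) ^ i * (-1) ^ (i + r) = x ^ i * (-1) ^ r" for x :: 'c
proof -
  have "(-1 :: 'c) ^ i * (-1) ^ i = 1" by (simp flip: power_mult_distrib)
  thus ?thesis by (simp add: power_minus[of x] power_add mult_ac)
qed

lemma expansion_term_eq:
  assumes "length xs \<le> m" "weight xs = i"
  shows "expansion_term a t pibar (m - length xs, xs)
    = (- pibar) ^ i * ((-1) ^ (i + length xs) * of_nat ((m - 1) choose length xs)
        * (1 / prod_list (map (dd q T) xs)) * a (m - length xs) * t ^ m)"
proof -
  have "t ^ m = t ^ (m - length xs) * t ^ length xs"
    using assms(1) by (simp add: power_add[symmetric])
  moreover have "m - length xs + length xs - 1 = m - 1" using assms(1) by simp
  ultimately show ?thesis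
    using assms(2) prod_list_expansion_factor[of "- t" pibar xs] minus_power_sign[of pibar i "length xs"]
    by (simp add: expansion_term_def neg_power_term_def power_minus[of t] mult_ac)
qed

lemma sum_expansion_term_weight_length:
  assumes "i \<ge> 1"
  shows "(\<Sum>nxs | weight (snd nxs) = i \<and> fst nxs + length (snd nxs) = m. expansion_term a t pibar nxs)
    = (- pibar) ^ i * (bcoef q T a i m * t ^ m)"
proof -
  define Y where "Y = {xs. length xs \<le> m \<and> weight xs = i}"
  define D where "D xs = 1 / prod_list (map (dd q T) xs)" for xs
  define c :: "nat \<Rightarrow> 'c" where "c r = (-1) ^ (i + r) * of_nat ((m - 1) choose r)" for r
  have finY: "finite Y" unfolding Y_def by (rule finite_subset[OF _ finite_weight_eq[of i]]) auto
  have "{nxs. weight (snd nxs) = i \<and> fst nxs + length (snd nxs) = m} = (\<lambda>xs. (m - length xs, xs)) ` Y"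
    unfolding Y_def by force
  moreover have "inj_on (\<lambda>xs. (m - length xs, xs)) Y" by (auto simp: inj_on_def)
  ultimately have "(\<Sum>nxs | weight (snd nxs) = i \<and> fst nxs + length (snd nxs) = m. expansion_term a t pibar nxs)
      = (\<Sum>xs\<in>Y. (- pibar) ^ i * (c (length xs) * D xs * a (m - length xs) * t ^ m))"
    by (simp add: sum.reindex Y_def D_def c_def expansion_term_eq)
  also have "\<dots> = (\<Sum>r\<le>m. \<Sum>xs | length xs = r \<and> weight xs = i.
      (- pibar) ^ i * (c r * D xs * a (m - r) * t ^ m))"
    by (subst sum.group[OF finY finite_atMost, of length, symmetric])
       (auto simp: Y_def intro!: sum.cong)
  also have "\<dots> = (- pibar) ^ i * ((\<Sum>r\<le>m. c r * (\<Sum>xs | length xs = r \<and> weight xs = i. D xs)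
      * a (m - r)) * t ^ m)"
    by (simp add: sum_distrib_left sum_distrib_right mult_ac)
  finally show ?thesis using bcoef_eq_sum_atMost[OF assms] by (simp add: D_def c_def)
qed

lemma has_sum_av_bcoef:
  assumes i: "i \<ge> 1" and pibar: "pibar \<noteq> 0"
    and null: "null_family av (expansion_term a t pibar) {nxs. weight (snd nxs) = i}"
  shows "has_sum_av av (\<lambda>m. bcoef q T a i m * t ^ m) UNIV
    (infsum_av av (expansion_term a t pibar) {nxs. weight (snd nxs) = i} / (- pibar) ^ i)"
proof -
  let ?W = "{nxs. weight (snd nxs) = i}"
  let ?B = "\<lambda>m. {nxs. weight (snd nxs) = i \<and> fst nxs + length (snd nxs) = m}"
  have "finite (?B m)" for m
    by (rule finite_subset[of _ "{..m} \<times> {xs. weight xs = i}"]) (auto simp: finite_weight_eq)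
  hence blocks: "infsum_av av (expansion_term a t pibar) (?B m) = (- pibar) ^ i * (bcoef q T a i m * t ^ m)" for m
    using sum_expansion_term_weight_length[OF i] by (simp add: infsum_av_finite)
  have "has_sum_av av (\<lambda>m. infsum_av av (expansion_term a t pibar) {nxs \<in> ?W. fst nxs + length (snd nxs) = m})
      UNIV (infsum_av av (expansion_term a t pibar) ?W)"
    by (rule has_sum_av_group[OF null null_family_has_sum_av[OF null]]) simp
  hence "has_sum_av av (\<lambda>m. (- pibar) ^ i * (bcoef q T a i m * t ^ m)) UNIV
      (infsum_av av (expansion_term a t pibar) ?W)"
    using blocks by simp
  from has_sum_av_cmult_right[OF this, of "1 / (- pibar) ^ i"]
  show ?thesis using pibar by simp
qed

lemma Dop_t_expansion:
  assumes "pibar \<noteq> 0" "i \<ge> 1" and u: "eC av q T (pibar * z) \<noteq> 0"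
    and f: "\<And>w. absi av q T w \<ge> R \<Longrightarrow> sums_av av (\<lambda>n. a n * tfun av q T pibar w ^ n) (f w)"
    and "absi av q T z \<ge> R" "absi av q T z > 0"
  shows "sums_av av (\<lambda>n. bcoef q T a i n * tfun av q T pibar z ^ n) (Dop av pibar f i z)"
proof -
  let ?t = "tfun av q T pibar z"
  let ?c = "\<lambda>k. infsum_av av (expansion_term a ?t pibar) {nxs. weight (snd nxs) = k}"
  note expansion = local_exp_expansion_term[OF u assms(1) f assms(5,6)]
  have "(THE c. local_exp av f z c) = ?c"
    using expansion(2) local_exp_unique[OF exists_nonzero_av_less] by blast
  hence "Dop av pibar f i z = ?c i / (- pibar) ^ i" by (simp add: Dop_def Dcal_def)
  thus ?thesis using has_sum_av_bcoef[OF assms(2,1) expansion(1)] by (simp add: has_sum_av_imp_sums_av)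
qed

end

lemma carlitz_field_if_setting:
  fixes av :: "'c::field \<Rightarrow> real"
  assumes "setting p q av T" shows "carlitz_field av q T"
proof -
  obtain m where m: "m \<ge> 1" "q = p ^ m" and p: "prime p" "of_nat p = (0 :: 'c)"
    using assms unfolding setting_def by blast
  have "CHAR('c) = p"
    using p CHAR_not_1'[where 'a = 'c] by (auto simp: of_nat_eq_0_iff_char_dvd prime_nat_iff)
  hence "(x + y) ^ q = x ^ q + y ^ q" for x y :: 'c
    using p(1) m(2) by (intro freshmans_dream') auto
  moreover have "q \<ge> 2"
    using m prime_ge_2_nat[OF p(1)] power_increasing[of 1 m p] by simp
  ultimately show ?thesis
    using assms unfolding setting_def carlitz_field_def carlitz_field_axioms_def nonarch_field_def by blast
qed

theorem lemma7:
  fixes p q :: nat and av :: "'c::field \<Rightarrow> real" and T pibar :: 'c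
    and f :: "'c \<Rightarrow> 'c" and a :: "nat \<Rightarrow> 'c" and i :: nat
  assumes "setting p q av T"
    and "\<forall>z. eC av q T z = 0 \<longleftrightarrow> (\<exists>b\<in>Aring q T. z = pibar * b)"
    and "in_O av q T pibar f a"
    and "i \<ge> 1"
  shows "\<exists>R. \<forall>z. absi av q T z \<ge> R \<longrightarrow>
           sums_av av (\<lambda>n. bcoef q T a i n * tfun av q T pibar z ^ n) (Dop av pibar f i z)"
proof -
  interpret carlitz_field av q T by (rule carlitz_field_if_setting[OF assms(1)])
  obtain R where R: "\<And>w. absi av q T w \<ge> R \<Longrightarrow> sums_av av (\<lambda>n. a n * tfun av q T pibar w ^ n) (f w)"
    using assms(3) unfolding in_O_def by blast
  show ?thesis
  proof (cases "pibar = 0")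
    case True
    \<comment> \<open>both sides vanish through the junk values \<open>1 / 0 = 0\<close> in \<open>t\<close> and \<open>x / 0 = 0\<close> in \<open>D\<^sub>i\<close>\<close>
    have "bcoef q T a i n * tfun av q T pibar z ^ n = 0" for n z
      using True by (cases n) (simp_all add: bcoef_def tfun_def eC_0)
    hence terms: "(\<lambda>n. bcoef q T a i n * tfun av q T pibar z ^ n) = (\<lambda>n. 0)" for z by (intro ext)
    have "Dop av pibar f i z = 0" for z
      using True assms(4) by (simp add: Dop_def)
    thus ?thesis unfolding terms by (simp add: sums_av_def conv_av_def)
  next
    case False
    have "sums_av av (\<lambda>n. bcoef q T a i n * tfun av q T pibar z ^ n) (Dop av pibar f i z)"
      if "absi av q T z \<ge> max R 1" for z
      using Dop_t_expansion[OF False assms(4) eC_nonzero_off_Kinf[OF assms(2) False] R] that by simp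
    thus ?thesis by blast
  qed
qed

end
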